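(* Let $\mathcal{H}$ be a finite-dimensional Hilbert space, $\{\rho_\theta;\theta\in\Theta\subset\mathbb{R}^2\}$ a smooth two-parameter family of density operators, $\theta_0\in\Theta$ with $\rho=\rho_{\theta_0}$ strictly positive, and suppose there exists a three-dimensional real subspace $\tilde{\mathcal{T}}$ of Hermitian operators with $\operatorname{span}_{\mathbb{R}}\{L_1^{(S)},L_2^{(S)}\}\subset\tilde{\mathcal{T}}$ and $\mathcal{D}_\rho(\tilde{\mathcal{T}})\subset\tilde{\mathcal{T}}$. Then for every $2\times2$ real positive matrix $G$, $$C^{(H)}_{\theta_0,G}=\max_{0\le\beta\le1}C^{(\beta)}_{\theta_0,G}=\begin{cases}C^{(1)}_{\theta_0,G}&\text{if }\hat\beta\ge1,\\ C^{(\hat\beta)}_{\theta_0,G}&\text{otherwise,}\end{cases}$$ where $\hat\beta=\dfrac{\operatorname{Tr}|\sqrt G\,\operatorname{Im}(J^{(R)}_{\theta_0})^{-1}\sqrt G|}{2\operatorname{Tr}G\{(J^{(S)}_{\theta_0})^{-1}-\operatorname{Re}((J^{(R)}_{\theta_0})^{-1})\}}$ if $(J^{(S)}_{\theta_0})^{-1}\ne\operatorname{Re}((J^{(R)}_{\theta_0})^{-1})$ and $\hat\beta=\infty$ otherwise.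
   Context: $\partial_i\rho=\frac{\partial}{\partial\theta^i}\rho_\theta|_{\theta=\theta_0}$. Commutation operator: $\mathcal{D}_\rho(X)\rho+\rho\mathcal{D}_\rho(X)=\sqrt{-1}(X\rho-\rho X)$. For $\beta\in[0,1]$, $L_i^{(\beta)}$ is defined by $\partial_i\rho=\frac{1+\beta}{2}\rho L_i^{(\beta)}+\frac{1-\beta}{2}L_i^{(\beta)}\rho$; $L_i^{(S)}=L_i^{(0)}$ (SLD, assumed linearly independent), $L_i^{(R)}=L_i^{(1)}$ (RLD). $J^{(\beta)}_{\theta_0}=[\operatorname{Tr}\partial_i\rho\,L_j^{(\beta)}]_{ij}$, $J^{(S)}=J^{(0)}$, $J^{(R)}=J^{(1)}$, $C^{(\beta)}_{\theta_0,G}=\operatorname{Tr}G(J^{(\beta)}_{\theta_0})^{-1}+\operatorname{Tr}|\sqrt G\,\operatorname{Im}(J^{(\beta)}_{\theta_0})^{-1}\sqrt G|$. Holevo bound: $C^{(H)}_{\theta_0,G}=\min_B\{\operatorname{Tr}GZ(B)+\operatorname{Tr}|\sqrt G\operatorname{Im}Z(B)\sqrt G|\}$ over Hermitian $B_1,B_2$ with $\operatorname{Tr}\partial_i\rho\,B_j=\delta_{ij}$, $Z_{ij}(B)=\operatorname{Tr}\rho B_jB_i$. Re, Im entrywise; $|X|=(X^*X)^{1/2}$. *)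

theory Defs
  imports "HOL-Analysis.Analysis"
begin

text \<open>Operators on a finite-dimensional Hilbert space are complex matrices indexed by a
finite type 'n. Parameter-space objects (2x2 matrices) are indexed by the type 2.\<close>

definition mtr :: "'a::comm_monoid_add^'n^'n \<Rightarrow> 'a" where
  "mtr A = (\<Sum>i\<in>UNIV. A$i$i)"

definition cadj :: "complex^'n^'m \<Rightarrow> complex^'m^'n" where
  "cadj A = (\<chi> i j. cnj (A$j$i))"

definition hermitian :: "complex^'n^'n \<Rightarrow> bool" where
  "hermitian A \<longleftrightarrow> cadj A = A"

definition cquad :: "complex^'n^'n \<Rightarrow> complex^'n \<Rightarrow> complex" where
  "cquad A x = (\<Sum>i\<in>UNIV. cnj (x$i) * (A *v x)$i)"

definition pos_semidef :: "complex^'n^'n \<Rightarrow> bool" where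
  "pos_semidef A \<longleftrightarrow> hermitian A \<and> (\<forall>x. 0 \<le> Re (cquad A x))"

definition strictly_pos :: "complex^'n^'n \<Rightarrow> bool" where
  "strictly_pos A \<longleftrightarrow> hermitian A \<and> (\<forall>x. x \<noteq> 0 \<longrightarrow> 0 < Re (cquad A x))"

definition density_op :: "complex^'n^'n \<Rightarrow> bool" where
  "density_op A \<longleftrightarrow> pos_semidef A \<and> mtr A = 1"

definition mRe :: "complex^'n^'m \<Rightarrow> real^'n^'m" where
  "mRe A = (\<chi> i j. Re (A$i$j))"

definition mIm :: "complex^'n^'m \<Rightarrow> real^'n^'m" where
  "mIm A = (\<chi> i j. Im (A$i$j))"

definition cmat :: "real^'n^'m \<Rightarrow> complex^'n^'m" where
  "cmat A = (\<chi> i j. complex_of_real (A$i$j))"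

definition real_psd :: "real^'n^'n \<Rightarrow> bool" where
  "real_psd A \<longleftrightarrow> transpose A = A \<and> (\<forall>x. 0 \<le> x \<bullet> (A *v x))"

definition real_pos_def :: "real^'n^'n \<Rightarrow> bool" where
  "real_pos_def A \<longleftrightarrow> transpose A = A \<and> (\<forall>x. x \<noteq> 0 \<longrightarrow> 0 < x \<bullet> (A *v x))"

definition msqrt :: "real^'n^'n \<Rightarrow> real^'n^'n" where
  "msqrt A = (THE S. real_psd S \<and> S ** S = A)"

definition mabs :: "real^'n^'n \<Rightarrow> real^'n^'n" where
  "mabs X = msqrt (transpose X ** X)"

definition cscale :: "complex \<Rightarrow> complex^'n^'m \<Rightarrow> complex^'n^'m" where
  "cscale c A = (\<chi> i j. c * A$i$j)"

definition comm_op :: "complex^'n^'n \<Rightarrow> complex^'n^'n \<Rightarrow> complex^'n^'n" where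
  "comm_op \<rho> X = (THE Y. Y ** \<rho> + \<rho> ** Y = cscale \<i> (X ** \<rho> - \<rho> ** X))"

definition logder :: "real \<Rightarrow> complex^'n^'n \<Rightarrow> complex^'n^'n \<Rightarrow> complex^'n^'n" where
  "logder \<beta> \<rho> dR = (THE L. dR = cscale (complex_of_real ((1 + \<beta>) / 2)) (\<rho> ** L)
                                 + cscale (complex_of_real ((1 - \<beta>) / 2)) (L ** \<rho>))"

definition Jmat :: "real \<Rightarrow> complex^'n^'n \<Rightarrow> (2 \<Rightarrow> complex^'n^'n) \<Rightarrow> complex^2^2" where
  "Jmat \<beta> \<rho> dR = (\<chi> i j. mtr (dR i ** logder \<beta> \<rho> (dR j)))"

definition Cbeta :: "real \<Rightarrow> real^2^2 \<Rightarrow> complex^'n^'n \<Rightarrow> (2 \<Rightarrow> complex^'n^'n) \<Rightarrow> real" where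
  "Cbeta \<beta> G \<rho> dR =
     (let Ji = matrix_inv (Jmat \<beta> \<rho> dR) in
      Re (mtr (cmat G ** Ji)) + mtr (mabs (msqrt G ** mIm Ji ** msqrt G)))"

definition Zmat :: "complex^'n^'n \<Rightarrow> (2 \<Rightarrow> complex^'n^'n) \<Rightarrow> complex^2^2" where
  "Zmat \<rho> B = (\<chi> i j. mtr (\<rho> ** B j ** B i))"

definition holevo :: "real^2^2 \<Rightarrow> complex^'n^'n \<Rightarrow> (2 \<Rightarrow> complex^'n^'n) \<Rightarrow> real" where
  "holevo G \<rho> dR = Inf {Re (mtr (cmat G ** Zmat \<rho> B)) + mtr (mabs (msqrt G ** mIm (Zmat \<rho> B) ** msqrt G))
     | B. (\<forall>j. hermitian (B j)) \<and> (\<forall>i j. mtr (dR i ** B j) = (if i = j then 1 else 0))}"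

definition beta_hat :: "real^2^2 \<Rightarrow> complex^'n^'n \<Rightarrow> (2 \<Rightarrow> complex^'n^'n) \<Rightarrow> ereal" where
  "beta_hat G \<rho> dR =
     (let JSi = matrix_inv (Jmat 0 \<rho> dR); JRi = matrix_inv (Jmat 1 \<rho> dR) in
      if JSi = cmat (mRe JRi) then \<infinity>
      else ereal (mtr (mabs (msqrt G ** mIm JRi ** msqrt G))
                  / (2 * Re (mtr (cmat G ** (JSi - cmat (mRe JRi)))))))"

end

(*
  For the SLD inner product g(X, Y) = Re tr (rho X Y) the commutation operator D is
  skew-adjoint, and the beta-superoperator L |-> (1+beta)/2 rho L + (1-beta)/2 L rho equals
  the symmetrised product with rho precomposed with 1 + i beta D.  Hence, if T is
  D-invariant, three-dimensional and contains the SLDs L1, L2, every beta-logarithmic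
  derivative can be computed in the complexification of T.  With e3 spanning the
  g-orthogonal complement of {L1, L2} in T this gives

    (J^(beta))^-1 = (J^(S))^-1 - beta^2 / g(e3, e3) u u^T + i beta g(L1, D L2) / det J^(S) eps,

  where u are the coordinates of the projection of D e3 onto span {L1, L2} and eps is the
  Levi-Civita symbol.  So C^(beta) is a concave quadratic in beta, maximal on [0, 1] at
  min (beta_hat, 1).

  Lower bound: for unbiased B and beta in [0, 1], positivity of tr (V^* L_beta V) for
  V = sum_i a_i (B_i - Y_i), with Y the dual basis of the beta-logarithmic derivatives,
  combined with tr (G Re P) >= 2 sqrt (det G) |Im P_12| for 2x2 matrices P >= 0, gives
  C^(beta) <= cost (B).  Upper bound: B_j = sum_k ((J^(S))^-1)_kj L_k + t_j e3 with
  t = mu adj(G) (-u_2, u_1) attains C^(min (beta_hat, 1)) for a suitable mu.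
*)

theory Submission
  imports Defs
begin

section \<open>Traces, adjoints and scalar multiples of complex matrices\<close>

lemma mtr_add: "mtr (A + B) = mtr A + mtr (B::'a::comm_monoid_add^'n^'n)"
  by (simp add: mtr_def sum.distrib)

lemma mtr_diff: "mtr (A - B) = mtr A - mtr (B::'a::ab_group_add^'n^'n)"
  by (simp add: mtr_def sum_subtractf)

lemma mtr_mult_commute: "mtr (A ** B) = mtr (B ** (A::'a::comm_semiring_1^'n^'n))"
  unfolding mtr_def using trace_mul_sym[of A B] by (simp add: trace_def)

lemma mtr_cscale: "mtr (cscale c A) = c * mtr A"
  by (simp add: mtr_def cscale_def sum_distrib_left)

lemma mtr_cadj: "mtr (cadj A) = cnj (mtr A)"
  by (simp add: cadj_def mtr_def)

lemma cscale_mult_left: "cscale c (A ** B) = cscale c A ** (B::complex^'n^'n)"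
  by (simp add: cscale_def matrix_matrix_mult_def vec_eq_iff sum_distrib_left mult.assoc)

lemma cscale_mult_right: "cscale c (A ** B) = A ** cscale c (B::complex^'n^'n)"
  by (simp add: cscale_def matrix_matrix_mult_def vec_eq_iff sum_distrib_left algebra_simps)

lemma cscale_add: "cscale c (A + B) = cscale c A + cscale c B"
  by (simp add: cscale_def vec_eq_iff algebra_simps)

lemma cscale_diff: "cscale c (A - B) = cscale c A - cscale c B"
  by (simp add: cscale_def vec_eq_iff algebra_simps)

lemma cscale_add_left: "cscale (c + d) A = cscale c A + cscale d A"
  by (simp add: cscale_def vec_eq_iff algebra_simps)

lemma cscale_cscale: "cscale c (cscale d A) = cscale (c * d) A"
  by (simp add: cscale_def vec_eq_iff algebra_simps)

lemma cscale_one [simp]: "cscale 1 A = A"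
  by (simp add: cscale_def vec_eq_iff)

lemma cscale_zero [simp]: "cscale 0 A = 0"
  by (simp add: cscale_def vec_eq_iff)

lemma cscale_neg: "cscale (- c) A = - cscale c A"
  by (simp add: cscale_def vec_eq_iff)

lemma scaleR_eq_cscale: "r *\<^sub>R A = cscale (complex_of_real r) A"
  by (simp add: cscale_def vec_eq_iff) (simp add: scaleR_conv_of_real)

lemma cadj_mult: "cadj (A ** B) = cadj B ** cadj (A::complex^'n^'n)"
  by (simp add: cadj_def matrix_matrix_mult_def vec_eq_iff mult.commute)

lemma cadj_add: "cadj (A + B) = cadj A + cadj B"
  by (simp add: cadj_def vec_eq_iff)

lemma cadj_diff: "cadj (A - B) = cadj A - cadj B"
  by (simp add: cadj_def vec_eq_iff)

lemma cadj_cadj [simp]: "cadj (cadj A) = A"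
  by (simp add: cadj_def vec_eq_iff)

lemma cadj_cscale: "cadj (cscale c A) = cscale (cnj c) (cadj A)"
  by (simp add: cadj_def cscale_def vec_eq_iff)

lemma mtr_mult_hermitian_real:
  assumes "hermitian A" "hermitian B"
  shows "cnj (mtr (A ** B)) = mtr (A ** B)"
  using assms by (simp add: mtr_cadj[symmetric] cadj_mult hermitian_def mtr_mult_commute)

lemma matrix_add_rdistrib: "(B + C) ** A = B ** A + C ** (A::'a::semiring_1^_^_)"
  by (vector matrix_matrix_mult_def sum.distrib[symmetric] field_simps)

lemma matrix_diff_ldistrib: "A ** (B - C) = A ** B - A ** (C::'a::ring_1^_^_)"
  by (vector matrix_matrix_mult_def sum_subtractf[symmetric] field_simps)

lemma matrix_diff_rdistrib: "(B - C) ** A = B ** A - C ** (A::'a::ring_1^_^_)"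
  by (vector matrix_matrix_mult_def sum_subtractf[symmetric] field_simps)

lemma matrix_inv_eqI:
  assumes "(A::'a::field^'k^'k) ** B = mat 1"
  shows "matrix_inv A = B"
proof -
  have "B ** A = mat 1"
    using assms matrix_left_right_inverse by blast
  then have inv: "A ** matrix_inv A = mat 1 \<and> matrix_inv A ** A = mat 1"
    unfolding matrix_inv_def using assms by (intro someI_ex[where P = "\<lambda>A'. A ** A' = mat 1 \<and> A' ** A = mat 1"]) blast
  then have "matrix_inv A = matrix_inv A ** (A ** B)"
    using assms by simp
  also have "\<dots> = B"
    using inv by (simp add: matrix_mul_assoc)
  finally show ?thesis .
qed

lemma mtr_cadj_sandwich_eq_sum:
  "mtr (cadj L ** (A ** L)) = (\<Sum>i\<in>UNIV. cquad (A::complex^'n^'n) (column i L))"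
  by (simp add: mtr_def cquad_def column_def matrix_matrix_mult_def matrix_vector_mult_def cadj_def)

lemma strictly_pos_cquad_nonneg:
  assumes "strictly_pos A"
  shows "0 \<le> Re (cquad A x)"
  using assms by (cases "x = 0") (auto simp: cquad_def strictly_pos_def less_imp_le)

lemma mtr_cadj_sandwich_nonneg:
  assumes "strictly_pos A"
  shows "0 \<le> Re (mtr (cadj L ** ((A::complex^'n^'n) ** L)))"
  unfolding mtr_cadj_sandwich_eq_sum Re_sum
  using strictly_pos_cquad_nonneg[OF assms] by (simp add: sum_nonneg)

lemma mtr_cadj_sandwich_pos:
  assumes "strictly_pos (A::complex^'n^'n)" "L \<noteq> 0"
  shows "0 < Re (mtr (cadj L ** (A ** L)))"
proof -
  obtain j i where "L$j$i \<noteq> 0"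
    using assms(2) by (metis vec_eq_iff zero_index)
  then have "column i L \<noteq> 0"
    by (metis column_def vec_lambda_beta zero_index)
  then show ?thesis
    unfolding mtr_cadj_sandwich_eq_sum Re_sum
    using assms(1) strictly_pos_cquad_nonneg[OF assms(1)]
    by (intro sum_pos2[where i = i]) (auto simp: strictly_pos_def)
qed

lemma mtr_cadj_sandwich_right_nonneg:
  assumes "strictly_pos A"
  shows "0 \<le> Re (mtr (cadj (L::complex^'n^'n) ** (L ** A)))"
proof -
  have "mtr (cadj L ** (L ** A)) = mtr (cadj (cadj L) ** (A ** cadj L))"
    using mtr_mult_commute[of "cadj L" "L ** A"] by (simp add: matrix_mul_assoc)
  then show ?thesis
    using mtr_cadj_sandwich_nonneg[OF assms, of "cadj L"] by simp
qed

section \<open>The \<open>\<beta>\<close>-superoperators, the commutation operator and the SLD inner product\<close>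

definition lr_mult :: "complex^'n^'n \<Rightarrow> real \<Rightarrow> real \<Rightarrow> complex^'n^'n \<Rightarrow> complex^'n^'n" where
  "lr_mult \<rho> a b L = cscale (complex_of_real a) (\<rho> ** L) + cscale (complex_of_real b) (L ** \<rho>)"

lemma lr_mult_add: "lr_mult \<rho> a b (X + Y) = lr_mult \<rho> a b X + lr_mult \<rho> a b Y"
  by (simp add: lr_mult_def matrix_add_ldistrib matrix_add_rdistrib cscale_add)

lemma lr_mult_diff: "lr_mult \<rho> a b (X - Y) = lr_mult \<rho> a b X - lr_mult \<rho> a b Y"
  by (simp add: lr_mult_def matrix_diff_ldistrib matrix_diff_rdistrib cscale_diff)

lemma lr_mult_cscale: "lr_mult \<rho> a b (cscale c X) = cscale c (lr_mult \<rho> a b X)"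
  unfolding lr_mult_def
  by (simp only: cscale_mult_left[symmetric] cscale_mult_right[symmetric] cscale_cscale
      mult.commute[of c] cscale_add)

lemma lr_mult_linear: "linear (lr_mult \<rho> a b)"
  by (rule linearI) (simp_all add: lr_mult_add lr_mult_cscale scaleR_eq_cscale)

lemma lr_mult_inj:
  assumes \<rho>: "strictly_pos \<rho>" and "a > 0" "b \<ge> 0"
  shows "inj (lr_mult \<rho> a b)"
proof -
  have "L = 0" if "lr_mult \<rho> a b L = 0" for L
  proof (rule ccontr)
    assume "L \<noteq> 0"
    then have "0 < Re (mtr (cadj L ** (\<rho> ** L)))"
      by (rule mtr_cadj_sandwich_pos[OF \<rho>])
    then have "0 < a * Re (mtr (cadj L ** (\<rho> ** L)))"
      using \<open>a > 0\<close> by simp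
    moreover have "0 \<le> b * Re (mtr (cadj L ** (L ** \<rho>)))"
      using mtr_cadj_sandwich_right_nonneg[OF \<rho>] \<open>b \<ge> 0\<close> by simp
    moreover have "0 = mtr (cadj L ** lr_mult \<rho> a b L)"
      using that by (simp add: mtr_def)
    then have "0 = Re (complex_of_real a * mtr (cadj L ** (\<rho> ** L))
        + complex_of_real b * mtr (cadj L ** (L ** \<rho>)))"
      by (simp add: lr_mult_def matrix_add_ldistrib mtr_add cscale_mult_right[symmetric] mtr_cscale)
    then have "0 = a * Re (mtr (cadj L ** (\<rho> ** L))) + b * Re (mtr (cadj L ** (L ** \<rho>)))"
      by simp
    ultimately show False by linarith
  qed
  then show ?thesis
    using linear_injective_0[OF lr_mult_linear] by blast
qed

lemma lr_mult_ex1: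
  assumes "strictly_pos \<rho>" "a > 0" "b \<ge> 0"
  shows "\<exists>!L. lr_mult \<rho> a b L = Y"
proof -
  have inj: "inj (lr_mult \<rho> a b)"
    by (rule lr_mult_inj[OF assms])
  then have "surj (lr_mult \<rho> a b)"
    by (intro linear_injective_imp_surjective[OF lr_mult_linear]) auto
  then show ?thesis
    using inj by (metis injD surjD)
qed

lemma comm_op_def': "comm_op \<rho> X = (THE Y. lr_mult \<rho> 1 1 Y = cscale \<i> (X ** \<rho> - \<rho> ** X))"
  by (simp add: comm_op_def lr_mult_def add.commute)

lemma comm_op_eq:
  assumes "strictly_pos \<rho>"
  shows "comm_op \<rho> X ** \<rho> + \<rho> ** comm_op \<rho> X = cscale \<i> (X ** \<rho> - \<rho> ** X)"
  using theI'[OF lr_mult_ex1[OF assms, of 1 1 "cscale \<i> (X ** \<rho> - \<rho> ** X)"]]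
  by (simp add: comm_op_def' lr_mult_def add.commute)

lemma comm_op_unique:
  assumes "strictly_pos \<rho>" "Y ** \<rho> + \<rho> ** Y = cscale \<i> (X ** \<rho> - \<rho> ** X)"
  shows "comm_op \<rho> X = Y"
  using the1_equality[OF lr_mult_ex1[OF assms(1), of 1 1 "cscale \<i> (X ** \<rho> - \<rho> ** X)"], of Y] assms(2)
  by (simp add: comm_op_def' lr_mult_def add.commute)

lemma comm_op_add:
  assumes "strictly_pos \<rho>"
  shows "comm_op \<rho> (X + Y) = comm_op \<rho> X + comm_op \<rho> Y"
proof (rule comm_op_unique[OF assms])
  have "(comm_op \<rho> X + comm_op \<rho> Y) ** \<rho> + \<rho> ** (comm_op \<rho> X + comm_op \<rho> Y)
     = (comm_op \<rho> X ** \<rho> + \<rho> ** comm_op \<rho> X) + (comm_op \<rho> Y ** \<rho> + \<rho> ** comm_op \<rho> Y)"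
    by (simp only: matrix_add_ldistrib matrix_add_rdistrib) (simp only: ac_simps)
  also have "\<dots> = cscale \<i> ((X + Y) ** \<rho> - \<rho> ** (X + Y))"
    by (simp only: comm_op_eq[OF assms] cscale_add[symmetric] matrix_add_ldistrib matrix_add_rdistrib)
      (simp add: algebra_simps)
  finally show "(comm_op \<rho> X + comm_op \<rho> Y) ** \<rho> + \<rho> ** (comm_op \<rho> X + comm_op \<rho> Y)
      = cscale \<i> ((X + Y) ** \<rho> - \<rho> ** (X + Y))" .
qed

lemma comm_op_cscale:
  assumes "strictly_pos \<rho>"
  shows "comm_op \<rho> (cscale c X) = cscale c (comm_op \<rho> X)"
proof (rule comm_op_unique[OF assms])
  have "cscale c (comm_op \<rho> X) ** \<rho> + \<rho> ** cscale c (comm_op \<rho> X)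
      = cscale c (comm_op \<rho> X ** \<rho> + \<rho> ** comm_op \<rho> X)"
    by (simp only: cscale_mult_left[symmetric] cscale_mult_right[symmetric] cscale_add)
  also have "\<dots> = cscale \<i> (cscale c X ** \<rho> - \<rho> ** cscale c X)"
    by (simp only: comm_op_eq[OF assms] cscale_cscale mult.commute[of c] cscale_diff
        cscale_mult_left[symmetric] cscale_mult_right[symmetric])
  finally show "cscale c (comm_op \<rho> X) ** \<rho> + \<rho> ** cscale c (comm_op \<rho> X)
      = cscale \<i> (cscale c X ** \<rho> - \<rho> ** cscale c X)" .
qed

lemma logder_def': "logder \<beta> \<rho> dR = (THE L. lr_mult \<rho> ((1 + \<beta>) / 2) ((1 - \<beta>) / 2) L = dR)"
  by (simp add: logder_def lr_mult_def eq_commute)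

lemma logder_eq:
  assumes "strictly_pos \<rho>" "0 \<le> \<beta>" "\<beta> \<le> 1"
  shows "lr_mult \<rho> ((1 + \<beta>) / 2) ((1 - \<beta>) / 2) (logder \<beta> \<rho> dR) = dR"
  unfolding logder_def' by (rule theI'[OF lr_mult_ex1]) (use assms in auto)

definition jordan_mult :: "complex^'n^'n \<Rightarrow> complex^'n^'n \<Rightarrow> complex^'n^'n" where
  "jordan_mult \<rho> X = lr_mult \<rho> (1/2) (1/2) X"

lemma jordan_mult_add: "jordan_mult \<rho> (X + Y) = jordan_mult \<rho> X + jordan_mult \<rho> Y"
  by (simp add: jordan_mult_def lr_mult_add)

lemma jordan_mult_cscale: "jordan_mult \<rho> (cscale c X) = cscale c (jordan_mult \<rho> X)"
  by (simp add: jordan_mult_def lr_mult_cscale)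

lemma jordan_mult_hermitian: "hermitian \<rho> \<Longrightarrow> hermitian X \<Longrightarrow> hermitian (jordan_mult \<rho> X)"
  by (simp add: hermitian_def jordan_mult_def lr_mult_def cadj_add cadj_cscale cadj_mult add.commute)

lemma jordan_mult_logder_0: "strictly_pos \<rho> \<Longrightarrow> jordan_mult \<rho> (logder 0 \<rho> dR) = dR"
  using logder_eq[of \<rho> 0 dR] by (simp add: jordan_mult_def)

lemma jordan_mult_comm_op:
  assumes "strictly_pos \<rho>"
  shows "jordan_mult \<rho> (comm_op \<rho> Y) = cscale (\<i>/2) (Y ** \<rho> - \<rho> ** Y)"
  using comm_op_eq[OF assms, of Y]
  by (simp add: jordan_mult_def lr_mult_def cscale_add[symmetric] add.commute cscale_cscale)

text \<open>Each \<open>\<beta>\<close>-superoperator is the symmetrised product with \<open>\<rho>\<close> precomposed with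
  \<open>1 + i \<beta> \<D>\<close>; this is how \<open>\<D>\<close>-invariance of a subspace controls all
  \<open>\<beta>\<close>-logarithmic derivatives at once.\<close>

lemma lr_mult_eq_jordan_mult_comm_op:
  assumes "strictly_pos \<rho>"
  shows "lr_mult \<rho> ((1 + \<beta>) / 2) ((1 - \<beta>) / 2) X
       = jordan_mult \<rho> (X + cscale (\<i> * complex_of_real \<beta>) (comm_op \<rho> X))"
  unfolding jordan_mult_add jordan_mult_cscale jordan_mult_comm_op[OF assms]
  by (simp add: jordan_mult_def lr_mult_def vec_eq_iff cscale_def algebra_simps)
    (simp add: field_simps)

definition sld_inner :: "complex^'n^'n \<Rightarrow> complex^'n^'n \<Rightarrow> complex^'n^'n \<Rightarrow> complex" where
  "sld_inner \<rho> X Y = mtr (jordan_mult \<rho> X ** Y)"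

lemma sld_inner_eq: "sld_inner \<rho> X Y = (mtr (\<rho> ** (X ** Y)) + mtr (\<rho> ** (Y ** X))) / 2"
proof -
  have "mtr (X ** \<rho> ** Y) = mtr (\<rho> ** (Y ** X))"
    using mtr_mult_commute[of X "\<rho> ** Y"] by (simp add: matrix_mul_assoc)
  then show ?thesis
    by (simp add: sld_inner_def jordan_mult_def lr_mult_def matrix_add_rdistrib mtr_add
        cscale_mult_left[symmetric] mtr_cscale matrix_mul_assoc)
qed

lemma sld_inner_commute: "sld_inner \<rho> X Y = sld_inner \<rho> Y X"
  by (simp add: sld_inner_eq add.commute)

lemma sld_inner_add_right: "sld_inner \<rho> X (Y + Z) = sld_inner \<rho> X Y + sld_inner \<rho> X Z"
  by (simp add: sld_inner_def matrix_add_ldistrib mtr_add)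

lemma sld_inner_add_left: "sld_inner \<rho> (Y + Z) X = sld_inner \<rho> Y X + sld_inner \<rho> Z X"
  by (metis sld_inner_commute sld_inner_add_right)

lemma sld_inner_diff_right: "sld_inner \<rho> X (Y - Z) = sld_inner \<rho> X Y - sld_inner \<rho> X Z"
  by (simp add: sld_inner_def matrix_diff_ldistrib mtr_diff)

lemma sld_inner_cscale_right: "sld_inner \<rho> X (cscale c Y) = c * sld_inner \<rho> X Y"
  by (simp add: sld_inner_def cscale_mult_right[symmetric] mtr_cscale)

lemma sld_inner_cscale_left: "sld_inner \<rho> (cscale c Y) X = c * sld_inner \<rho> Y X"
  by (metis sld_inner_commute sld_inner_cscale_right)

lemma sld_inner_real:
  assumes "hermitian \<rho>" "hermitian X" "hermitian Y"
  shows "cnj (sld_inner \<rho> X Y) = sld_inner \<rho> X Y"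
  unfolding sld_inner_def
  using assms by (intro mtr_mult_hermitian_real jordan_mult_hermitian)

lemma sld_inner_pos:
  assumes "strictly_pos \<rho>" "hermitian X" "X \<noteq> 0"
  shows "0 < Re (sld_inner \<rho> X X)"
proof -
  have "mtr (\<rho> ** (X ** X)) = mtr (X ** (\<rho> ** X))"
    using mtr_mult_commute[of \<rho> "X ** X"] mtr_mult_commute[of X "\<rho> ** X"]
    by (simp add: matrix_mul_assoc)
  then have "sld_inner \<rho> X X = mtr (cadj X ** (\<rho> ** X))"
    using assms(2) by (simp add: sld_inner_eq hermitian_def)
  then show ?thesis
    using mtr_cadj_sandwich_pos assms by metis
qed

lemma sld_inner_comm_op:
  assumes "strictly_pos \<rho>"
  shows "sld_inner \<rho> X (comm_op \<rho> Y) = (\<i>/2) * (mtr (\<rho> ** (X ** Y)) - mtr (\<rho> ** (Y ** X)))"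
proof -
  have "mtr (Y ** \<rho> ** X) = mtr (\<rho> ** (X ** Y))"
    using mtr_mult_commute[of Y "\<rho> ** X"] by (simp add: matrix_mul_assoc)
  then show ?thesis
    by (subst sld_inner_commute)
      (simp add: sld_inner_def jordan_mult_comm_op[OF assms] cscale_mult_left[symmetric]
        mtr_cscale matrix_diff_rdistrib mtr_diff matrix_mul_assoc)
qed

lemma sld_inner_comm_op_antisym:
  "strictly_pos \<rho> \<Longrightarrow> sld_inner \<rho> X (comm_op \<rho> Y) = - sld_inner \<rho> Y (comm_op \<rho> X)"
  by (simp add: sld_inner_comm_op algebra_simps)

lemma sld_inner_comm_op_self: "strictly_pos \<rho> \<Longrightarrow> sld_inner \<rho> X (comm_op \<rho> X) = 0"
  by (simp add: sld_inner_comm_op)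

lemma mtr_rho_mult_eq_sld_inner:
  assumes "strictly_pos \<rho>"
  shows "mtr (\<rho> ** (X ** Y)) = sld_inner \<rho> X Y - \<i> * sld_inner \<rho> X (comm_op \<rho> Y)"
  unfolding sld_inner_comm_op[OF assms] by (simp add: sld_inner_eq field_simps)

section \<open>Two-by-two matrices\<close>

lemma matrix_mult_2_nth: "((A::'a::comm_ring_1^2^2) ** B)$i$j = A$i$1 * B$1$j + A$i$2 * B$2$j"
  by (simp add: matrix_matrix_mult_def sum_2)

lemma matrix_2_eq_iff: "(A::'a^2^2) = B \<longleftrightarrow> A$1$1 = B$1$1 \<and> A$1$2 = B$1$2 \<and> A$2$1 = B$2$1 \<and> A$2$2 = B$2$2"
  by (auto simp: vec_eq_iff forall_2)

lemma inner_matrix_vector_mult_2: "(x::real^2) \<bullet> (S *v x) = x$1*x$1*S$1$1 + x$1*x$2*(S$1$2+S$2$1) + x$2*x$2*S$2$2"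
  by (simp add: inner_vec_def sum_2 matrix_vector_mult_def algebra_simps)

lemma quadratic_form_nonneg:
  fixes a b c :: real
  assumes "0 \<le> a" "0 \<le> c" "b*b \<le> a*c"
  shows "0 \<le> a*p*p + 2*b*p*q + c*q*q"
proof (cases "a = 0")
  case True
  then have "b = 0" using assms by (smt (verit) mult_eq_0_iff mult_le_0_iff zero_le_square)
  then show ?thesis using True assms by (metis add_0 mult.assoc mult_nonneg_nonneg mult_zero_left mult_zero_right zero_le_square)
next
  case False
  then have a: "a > 0" using assms by simp
  have "a * (a*p*p + 2*b*p*q + c*q*q) = (a*p + b*q)^2 + (a*c - b*b)*q*q"
    by (simp add: power2_eq_square algebra_simps)
  also have "\<dots> \<ge> 0"
  proof -
    have "0 \<le> (a*c - b*b) * (q*q)" using assms by simp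
    then show ?thesis by (simp add: mult.assoc)
  qed
  finally show ?thesis using a by (simp add: zero_le_mult_iff)
qed

lemma real_psd_2_entries:
  assumes "real_psd (S::real^2^2)"
  shows "S$1$2 = S$2$1" "0 \<le> S$1$1" "0 \<le> S$2$2" "S$1$2 * S$1$2 \<le> S$1$1 * S$2$2"
proof -
  have sym: "transpose S = S" and q: "\<And>x. 0 \<le> x \<bullet> (S *v x)" using assms real_psd_def by auto
  show s: "S$1$2 = S$2$1" using arg_cong[OF sym, of "\<lambda>M. M$1$2"] by (simp add: transpose_def)
  have q2: "0 \<le> u*u*S$1$1 + 2*u*w*S$1$2 + w*w*S$2$2" for u w
    using q[of "vector [u, w]"] unfolding inner_matrix_vector_mult_2 by (simp add: s algebra_simps)
  show a: "0 \<le> S$1$1" using q2[of 1 0] by simp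
  show c: "0 \<le> S$2$2" using q2[of 0 1] by simp
  show "S$1$2 * S$1$2 \<le> S$1$1 * S$2$2"
  proof (cases "S$2$2 = 0")
    case True
    have "S$1$2 = 0"
    proof (rule ccontr)
      assume ne: "S$1$2 \<noteq> 0"
      have "0 \<le> (-S$1$2)*(-S$1$2)*S$1$1 + 2*(-S$1$2)*(S$1$1+1)*S$1$2" using q2[of "-S$1$2" "S$1$1+1"] True by simp
      moreover have "(-S$1$2)*(-S$1$2)*S$1$1 + 2*(-S$1$2)*(S$1$1+1)*S$1$2 = - ((S$1$2 * S$1$2) * (S$1$1 + 2))"
        by (simp add: algebra_simps)
      moreover have "(S$1$2 * S$1$2) * (S$1$1 + 2) > 0"
      proof -
        have "S$1$2 * S$1$2 > 0" using ne by (metis not_real_square_gt_zero)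
        then show ?thesis using a by (simp add: mult_pos_pos)
      qed
      ultimately show False by linarith
    qed
    then show ?thesis using True by simp
  next
    case False
    then have c': "S$2$2 > 0" using c by simp
    have "0 \<le> S$2$2*S$2$2*S$1$1 + 2*S$2$2*(-S$1$2)*S$1$2 + (-S$1$2)*(-S$1$2)*S$2$2"
      using q2[of "S$2$2" "-S$1$2"] .
    also have "\<dots> = S$2$2 * (S$1$1 * S$2$2 - S$1$2 * S$1$2)" by (simp add: algebra_simps)
    finally show ?thesis using c' by (simp add: zero_le_mult_iff)
  qed
qed

text \<open>The closed form \<open>\<surd>A = (A + \<surd>(det A) I) / \<surd>(tr A + 2 \<surd>(det A))\<close>, obtained from the
  Cayley--Hamilton identity \<open>S\<^sup>2 - (tr S) S + (det S) I = 0\<close> for \<open>S = \<surd>A\<close>.\<close>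

definition sqrt2x2 :: "real^2^2 \<Rightarrow> real^2^2" where
  "sqrt2x2 A = (let d = sqrt (det A); t = sqrt (A$1$1 + A$2$2 + 2*d) in
     if t = 0 then 0 else (\<chi> i j. (A$i$j + (if i = j then d else 0)) / t))"

lemma real_psd_square_eq_sqrt2x2:
  assumes psd: "real_psd (S::real^2^2)" and SA: "S ** S = A"
  shows "S = sqrt2x2 A"
proof -
  note p = real_psd_2_entries[OF psd]
  define x y z where "x = S$1$1" and "y = S$1$2" and "z = S$2$2"
  have S21: "S$2$1 = y" using p(1) y_def by simp
  have A11: "A$1$1 = x*x + y*y" using SA[symmetric] by (simp add: matrix_mult_2_nth x_def y_def S21)
  have A12: "A$1$2 = y*(x+z)" using SA[symmetric] by (simp add: matrix_mult_2_nth x_def y_def z_def S21 algebra_simps)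
  have A21: "A$2$1 = y*(x+z)" using SA[symmetric] by (simp add: matrix_mult_2_nth x_def y_def z_def S21 algebra_simps)
  have A22: "A$2$2 = y*y + z*z" using SA[symmetric] by (simp add: matrix_mult_2_nth y_def z_def S21)
  have x0: "0 \<le> x" and z0: "0 \<le> z" and d0: "0 \<le> x*z - y*y" using p x_def y_def z_def by auto
  have det: "A$1$1*A$2$2 - A$1$2*A$2$1 = (x*z - y*y)^2"
    unfolding A11 A12 A21 A22 by (simp add: power2_eq_square algebra_simps)
  have sd: "sqrt (det A) = x*z - y*y" unfolding det_2 det using d0 by simp
  have tt: "A$1$1 + A$2$2 + 2*(x*z - y*y) = (x+z)^2"
    unfolding A11 A22 by (simp add: power2_eq_square algebra_simps)
  have st: "sqrt (A$1$1 + A$2$2 + 2*(x*z - y*y)) = x + z" unfolding tt using x0 z0 by simp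
  show ?thesis
  proof (cases "x + z = 0")
    case True
    then have "x = 0" "z = 0" using x0 z0 by auto
    then have "y = 0" using d0 by (smt (verit) mult_eq_0_iff zero_le_square mult_zero_left)
    then have "S = 0" using \<open>x = 0\<close> \<open>z = 0\<close> S21 by (simp add: matrix_2_eq_iff x_def y_def z_def)
    then show ?thesis using True unfolding sqrt2x2_def Let_def sd st by simp
  next
    case False
    then have pos: "x + z > 0" using x0 z0 by simp
    show ?thesis unfolding sqrt2x2_def Let_def sd st using False
      apply (simp add: matrix_2_eq_iff A11 A12 A21 A22)
      apply (simp add: x_def[symmetric] y_def[symmetric] z_def[symmetric] S21)
      using pos by (simp add: field_simps power2_eq_square)
  qed
qed

lemma sqrt2x2_0 [simp]: "sqrt2x2 0 = 0"
  by (simp add: sqrt2x2_def det_2)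

lemma sqrt2x2_nonzero:
  fixes A :: "real^2^2"
  assumes s: "A$1$2 = A$2$1" and a: "0 \<le> A$1$1" and c: "0 \<le> A$2$2"
    and det: "A$1$2 * A$1$2 \<le> A$1$1 * A$2$2" and "A \<noteq> 0"
  defines "d \<equiv> sqrt (det A)" and "t \<equiv> sqrt (A$1$1 + A$2$2 + 2 * sqrt (det A))"
  shows "0 \<le> d" "d * d = A$1$1 * A$2$2 - A$1$2 * A$2$1" "0 < t" "t * t = A$1$1 + A$2$2 + 2 * d"
    "sqrt2x2 A = (\<chi> i j. (A$i$j + (if i = j then d else 0)) / t)"
proof -
  show d0: "0 \<le> d" and "d * d = A$1$1 * A$2$2 - A$1$2 * A$2$1"
    using det s unfolding d_def det_2 by simp_all
  show "t * t = A$1$1 + A$2$2 + 2 * d"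
    using a c d0 unfolding t_def d_def by simp
  have "t \<noteq> 0"
  proof
    assume "t = 0"
    then have "A$1$1 + A$2$2 + 2 * d = 0"
      unfolding t_def d_def by simp
    then have "A$1$1 = 0" "A$2$2 = 0"
      using a c d0 by linarith+
    moreover have "A$1$2 = 0"
      using det calculation zero_le_square[of "A$1$2"] by simp
    ultimately show False
      using \<open>A \<noteq> 0\<close> s by (simp add: matrix_2_eq_iff)
  qed
  then show "0 < t"
    using a c d0 unfolding t_def d_def by (simp add: order_le_neq_trans)
  show "sqrt2x2 A = (\<chi> i j. (A$i$j + (if i = j then d else 0)) / t)"
    using \<open>t \<noteq> 0\<close> unfolding sqrt2x2_def Let_def t_def d_def by simp
qed

lemma real_psd_sqrt2x2:
  fixes A :: "real^2^2"
  assumes s: "A$1$2 = A$2$1" and a: "0 \<le> A$1$1" and c: "0 \<le> A$2$2"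
    and det: "A$1$2 * A$1$2 \<le> A$1$1 * A$2$2"
  shows "real_psd (sqrt2x2 A)"
proof (cases "A = 0")
  case True
  show ?thesis
    unfolding True by (simp add: real_psd_def transpose_def vec_eq_iff)
next
  case False
  note S = sqrt2x2_nonzero[OF assms False]
  show ?thesis
    unfolding real_psd_def
  proof (intro conjI allI)
    show "transpose (sqrt2x2 A) = sqrt2x2 A"
      unfolding S(5) by (simp add: matrix_2_eq_iff transpose_def s)
    fix x :: "real^2"
    have "x \<bullet> (sqrt2x2 A *v x) = ((A$1$1 * x$1 * x$1 + 2 * A$1$2 * x$1 * x$2 + A$2$2 * x$2 * x$2)
        + sqrt (det A) * (x$1 * x$1 + x$2 * x$2)) / sqrt (A$1$1 + A$2$2 + 2 * sqrt (det A))"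
      unfolding inner_matrix_vector_mult_2 S(5) using S(3) by (simp add: s field_simps)
    moreover have "0 \<le> A$1$1 * x$1 * x$1 + 2 * A$1$2 * x$1 * x$2 + A$2$2 * x$2 * x$2"
      by (rule quadratic_form_nonneg[OF a c det])
    ultimately show "0 \<le> x \<bullet> (sqrt2x2 A *v x)"
      using S(1) S(3) by simp
  qed
qed

lemma sqrt2x2_square:
  fixes A :: "real^2^2"
  assumes s: "A$1$2 = A$2$1" and a: "0 \<le> A$1$1" and c: "0 \<le> A$2$2"
    and det: "A$1$2 * A$1$2 \<le> A$1$1 * A$2$2"
  shows "sqrt2x2 A ** sqrt2x2 A = A"
proof (cases "A = 0")
  case True
  show ?thesis
    unfolding True by (simp add: matrix_matrix_mult_def vec_eq_iff)
next
  case False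
  define d t where "d = sqrt (det A)" and "t = sqrt (A$1$1 + A$2$2 + 2 * sqrt (det A))"
  note S = sqrt2x2_nonzero[OF assms False, folded d_def t_def]
  have tX: "t * (t * X) = (A$1$1 + A$2$2 + 2 * d) * X" for X
    by (simp add: mult.assoc[symmetric] S(4))
  have dX: "d * (d * X) = (A$1$1 * A$2$2 - A$1$2 * A$2$1) * X" for X
    by (simp add: mult.assoc[symmetric] S(2))
  show ?thesis
    unfolding S(5) matrix_2_eq_iff using S(3)
    apply (simp add: matrix_mult_2_nth field_simps)
    apply (simp add: tX dX s algebra_simps)
    using S(2) s by simp
qed

lemma det_real_psd_sqrt:
  assumes "real_psd (S::real^2^2)" "S ** S = A"
  shows "det S = sqrt (det A)"
proof -
  have "0 \<le> det S"
    using real_psd_2_entries[OF assms(1)] by (simp add: det_2)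
  moreover have "(det S)\<^sup>2 = det A"
    using assms(2) det_mul[of S S] by (simp add: power2_eq_square)
  ultimately show ?thesis
    by (simp add: real_sqrt_unique)
qed

lemma msqrt_eq_sqrt2x2:
  fixes A :: "real^2^2"
  assumes "A$1$2 = A$2$1" "0 \<le> A$1$1" "0 \<le> A$2$2" "A$1$2 * A$1$2 \<le> A$1$1 * A$2$2"
  shows "msqrt A = sqrt2x2 A"
  unfolding msqrt_def
proof (rule the_equality)
  show "real_psd (sqrt2x2 A) \<and> sqrt2x2 A ** sqrt2x2 A = A"
    using real_psd_sqrt2x2[OF assms] sqrt2x2_square[OF assms] by blast
qed (use real_psd_square_eq_sqrt2x2 in blast)

lemma mtr_2: "mtr (A::real^2^2) = A$1$1 + A$2$2" by (simp add: mtr_def sum_2)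

lemma real_pos_def_2_entries:
  assumes "real_pos_def (G::real^2^2)"
  shows "G$1$2 = G$2$1" "0 < G$1$1" "0 < G$2$2" "0 < det G"
proof -
  have sym: "transpose G = G" and q: "\<And>x. x \<noteq> 0 \<Longrightarrow> 0 < x \<bullet> (G *v x)" using assms real_pos_def_def by auto
  show s: "G$1$2 = G$2$1" using arg_cong[OF sym, of "\<lambda>M. M$1$2"] by (simp add: transpose_def)
  have nz: "vector [u, w] \<noteq> (0::real^2)" if "u \<noteq> 0 \<or> w \<noteq> 0" for u w
    using that by (metis vector_2 zero_index)
  have q2: "0 < u*u*G$1$1 + 2*u*w*G$1$2 + w*w*G$2$2" if "u \<noteq> 0 \<or> w \<noteq> 0" for u w
    using q[OF nz[OF that]] unfolding inner_matrix_vector_mult_2 by (simp add: s algebra_simps)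
  show a: "0 < G$1$1" using q2[of 1 0] by simp
  show c: "0 < G$2$2" using q2[of 0 1] by simp
  have "0 < G$2$2*G$2$2*G$1$1 + 2*G$2$2*(-G$1$2)*G$1$2 + (-G$1$2)*(-G$1$2)*G$2$2"
    using q2[of "G$2$2" "-G$1$2"] c by simp
  also have "\<dots> = G$2$2 * (G$1$1 * G$2$2 - G$1$2 * G$2$1)" by (simp add: s algebra_simps)
  finally show "0 < det G" using c by (simp add: det_2 zero_less_mult_iff)
qed

lemma msqrt_real_pos_def_2:
  assumes "real_pos_def (G::real^2^2)"
  shows "real_psd (msqrt G)" "msqrt G ** msqrt G = G"
    "det (msqrt G) = sqrt (det G)"
proof -
  note p = real_pos_def_2_entries[OF assms]
  have c: "G$1$2 * G$1$2 \<le> G$1$1 * G$2$2" using p by (simp add: det_2)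
  have m: "msqrt G = sqrt2x2 G"
    using p c by (intro msqrt_eq_sqrt2x2) simp_all
  have entries: "G$1$2 = G$2$1" "0 \<le> G$1$1" "0 \<le> G$2$2" "G$1$2 * G$1$2 \<le> G$1$1 * G$2$2"
    using p c by simp_all
  show a: "real_psd (msqrt G)" "msqrt G ** msqrt G = G"
    unfolding m by (rule real_psd_sqrt2x2[OF entries] sqrt2x2_square[OF entries])+
  show "det (msqrt G) = sqrt (det G)"
    by (rule det_real_psd_sqrt[OF a])
qed

lemma mtr_mabs_antisym_2:
  fixes G M :: "real^2^2"
  assumes G: "real_pos_def G" and M: "M$1$1 = 0" "M$2$2 = 0" "M$2$1 = - M$1$2"
  shows "mtr (mabs (msqrt G ** M ** msqrt G)) = 2 * sqrt (det G) * \<bar>M$1$2\<bar>"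
proof -
  define S where "S = msqrt G"
  note sG = msqrt_real_pos_def_2[OF G, folded S_def]
  note p = real_psd_2_entries[OF sG(1)]
  define \<delta> where "\<delta> = sqrt (det G)"
  have d0: "0 \<le> \<delta>" using real_pos_def_2_entries[OF G] by (simp add: \<delta>_def)
  define m where "m = M$1$2"
  define X where "X = S ** M ** S"
  have e: "S$1$1 * (w * S$2$2) = w*\<delta> + w*(S$2$1*S$2$1)" for w
  proof -
    have "det S = \<delta>" using sG(3) \<delta>_def by simp
    then have "S$1$1 * S$2$2 = \<delta> + S$2$1*S$2$1" using p(1) by (simp add: det_2)
    then show ?thesis by (metis distrib_left mult.left_commute)
  qed
  have X: "X$1$1 = 0" "X$1$2 = m*\<delta>" "X$2$1 = -(m*\<delta>)" "X$2$2 = 0"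
    using p(1) M unfolding X_def m_def by (simp_all add: matrix_mult_2_nth algebra_simps e)
  define P where "P = transpose X ** X"
  have P: "P$1$1 = (m*\<delta>)*(m*\<delta>)" "P$1$2 = 0" "P$2$1 = 0" "P$2$2 = (m*\<delta>)*(m*\<delta>)"
    unfolding P_def by (simp_all add: matrix_mult_2_nth transpose_def X)
  have mP: "mabs X = sqrt2x2 P" unfolding mabs_def P_def[symmetric] by (rule msqrt_eq_sqrt2x2) (simp_all add: P)
  have "mtr (sqrt2x2 P) = 2 * \<delta> * \<bar>m\<bar>"
  proof (cases "m*\<delta> = 0")
    case True
    then have "sqrt2x2 P = 0" unfolding sqrt2x2_def Let_def using True by (auto simp: det_2 P)
    then show ?thesis using True d0 by (auto simp: mtr_2)
  next
    case False
    have s1: "sqrt (det P) = (m*\<delta>)*(m*\<delta>)" by (simp add: det_2 P)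
    have s2: "sqrt (P$1$1 + P$2$2 + 2*((m*\<delta>)*(m*\<delta>))) = 2*\<bar>m*\<delta>\<bar>"
    proof -
      have h: "P$1$1 + P$2$2 + 2*((m*\<delta>)*(m*\<delta>)) = (2*\<bar>m*\<delta>\<bar>)^2" by (simp add: P power2_eq_square algebra_simps)
      show ?thesis unfolding h real_sqrt_abs by simp
    qed
    show ?thesis unfolding sqrt2x2_def Let_def s1 s2 using False d0
      by (simp add: mtr_2 P abs_mult field_simps)
  qed
  then show ?thesis unfolding S_def[symmetric] X_def[symmetric] mP m_def \<delta>_def .
qed

lemma hermitian_psd_2_entries:
  fixes P11 P12 P21 P22 :: complex
  assumes i1: "Im P11 = 0" and i2: "Im P22 = 0" and h: "P21 = cnj P12"
    and q: "\<And>a b. 0 \<le> Re (cnj a * P11 * a + cnj a * P12 * b + cnj b * P21 * a + cnj b * P22 * b)"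
  shows "0 \<le> Re P11" "0 \<le> Re P22" "(Re P12)^2 + (Im P12)^2 \<le> Re P11 * Re P22"
proof -
  have qr: "0 \<le> Re (cnj a * P11 * a + cnj a * P12 * b + cnj b * cnj P12 * a + cnj b * P22 * b)" for a b
    using q[of a b] h by simp
  show p: "0 \<le> Re P11" using qr[of 1 0] by simp
  show r: "0 \<le> Re P22" using qr[of 0 1] by simp
  define n where "n = (Re P12)^2 + (Im P12)^2"
  have n0: "0 \<le> n" by (simp add: n_def)
  have "n * Re P22 \<le> Re P11 * Re P22 * Re P22"
  proof -
    have "0 \<le> Re (cnj (complex_of_real (Re P22)) * P11 * complex_of_real (Re P22) + cnj (complex_of_real (Re P22)) * P12 * (- cnj P12)
        + cnj (- cnj P12) * cnj P12 * complex_of_real (Re P22) + cnj (- cnj P12) * P22 * (- cnj P12))"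
      by (rule qr)
    also have "\<dots> = Re P22 * (Re P11 * Re P22 - n)"
      using i1 i2 by (simp add: n_def power2_eq_square algebra_simps)
    finally show ?thesis by (simp add: algebra_simps)
  qed
  show "(Re P12)^2 + (Im P12)^2 \<le> Re P11 * Re P22"
  proof (cases "Re P22 = 0")
    case False
    then have "Re P22 > 0" using r by simp
    then show ?thesis using \<open>n * Re P22 \<le> Re P11 * Re P22 * Re P22\<close> unfolding n_def[symmetric] by simp
  next
    case True
    have "0 \<le> Re (cnj (complex_of_real n) * P11 * complex_of_real n + cnj (complex_of_real n) * P12 * (- complex_of_real (Re P11 + 1) * cnj P12)
        + cnj (- complex_of_real (Re P11 + 1) * cnj P12) * cnj P12 * complex_of_real n
        + cnj (- complex_of_real (Re P11 + 1) * cnj P12) * P22 * (- complex_of_real (Re P11 + 1) * cnj P12))"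
      by (rule qr)
    also have "\<dots> = - (n * n * (Re P11 + 2))"
      using i1 i2 True by (simp add: n_def power2_eq_square algebra_simps)
    finally have "n * n * (Re P11 + 2) \<le> 0" by simp
    then have "n = 0" using p n0 by (smt (verit) mult_nonneg_nonneg mult_pos_pos)
    then show ?thesis using True n_def by simp
  qed
qed

text \<open>For \<open>P = [[p, re + i im], [re - i im, r]] \<ge> 0\<close> this is
  \<open>tr (G Re P) \<ge> 2 \<surd>(det G det (Re P)) \<ge> 2 \<surd>(det G) |im|\<close>.\<close>

lemma weighted_trace_ge_abs_im_2:
  fixes G :: "real^2^2" and p r re im :: real
  assumes G: "real_pos_def G" and p: "0 \<le> p" and r: "0 \<le> r" and d: "re^2 + im^2 \<le> p * r"
  shows "2 * sqrt (det G) * \<bar>im\<bar> \<le> G$1$1 * p + 2 * G$1$2 * re + G$2$2 * r"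
proof -
  note g = real_pos_def_2_entries[OF G]
  define a b c where "a = G$1$1" and "b = G$1$2" and "c = G$2$2"
  define D where "D = a*c - b*b"
  have Dd: "det G = D" using g(1) by (simp add: det_2 D_def a_def b_def c_def)
  have a0: "a > 0" and D0: "D > 0" using g Dd by (auto simp: a_def)
  define L where "L = a * p + 2 * b * re + c * r"
  define u where "u = a*a*p + 2*a*b*re + b*b*r"
  have aL: "a * L = u + D * r" by (simp add: L_def u_def D_def algebra_simps)
  have u0: "0 \<le> u"
  proof -
    have "re*re \<le> p*r" using d by (smt (verit) power2_eq_square zero_le_power2)
    then have "0 \<le> p*a*a + 2*re*a*b + r*b*b" by (rule quadratic_form_nonneg[OF p r])
    then show ?thesis by (simp add: u_def algebra_simps)
  qed
  have L0: "0 \<le> L" using aL u0 D0 r a0 by (smt (verit) mult_nonneg_nonneg zero_le_mult_iff)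
  have ur: "a*a*(p*r - re*re) \<le> u * r"
  proof -
    have "u * r - a*a*(p*r - re*re) = (a*re + b*r)^2" by (simp add: u_def power2_eq_square algebra_simps)
    then show ?thesis by (smt (verit) zero_le_power2)
  qed
  have amgm: "4 * u * (D * r) \<le> (u + D*r)^2"
  proof -
    have "(u + D*r)^2 - 4 * u * (D * r) = (u - D*r)^2" by (simp add: power2_eq_square algebra_simps)
    then show ?thesis by (smt (verit) zero_le_power2)
  qed
  have "a*a*(4 * D * im^2) \<le> a*a*(4 * D * (p*r - re*re))"
    using d D0 by (simp add: power2_eq_square mult_left_mono)
  also have "\<dots> = 4 * D * (a*a*(p*r - re*re))" by simp
  also have "\<dots> \<le> 4 * D * (u * r)" using ur D0 by simp
  also have "\<dots> \<le> (a * L)^2" using amgm unfolding aL by (simp add: algebra_simps)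
  finally have "a*a*(4 * D * im^2) \<le> a*a*L^2" by (simp add: power2_eq_square algebra_simps)
  then have "4 * D * im^2 \<le> L^2" using a0 by (simp add: mult_le_cancel_left)
  then have "sqrt (4 * D * im^2) \<le> sqrt (L^2)" by (rule real_sqrt_le_mono)
  moreover have "sqrt (4 * D * im^2) = 2 * sqrt D * \<bar>im\<bar>" by (simp add: real_sqrt_mult)
  ultimately show ?thesis using L0 unfolding Dd L_def a_def b_def c_def by simp
qed

definition holevo_cost :: "real^2^2 \<Rightarrow> complex^2^2 \<Rightarrow> real" where
  "holevo_cost G Z = Re (mtr (cmat G ** Z)) + mtr (mabs (msqrt G ** mIm Z ** msqrt G))"

lemma Cbeta_eq_holevo_cost: "Cbeta \<beta> G \<rho> dR = holevo_cost G (matrix_inv (Jmat \<beta> \<rho> dR))"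
  by (simp add: Cbeta_def holevo_cost_def Let_def)

lemma holevo_eq_Inf_holevo_cost:
  "holevo G \<rho> dR = Inf {holevo_cost G (Zmat \<rho> B) | B.
     (\<forall>j. hermitian (B j)) \<and> (\<forall>i j. mtr (dR i ** B j) = (if i = j then 1 else 0))}"
  by (simp add: holevo_def holevo_cost_def)

lemma holevo_cost_hermitian_2:
  assumes G: "real_pos_def G" and C: "\<And>i j. C$j$i = cnj (C$i$j)"
  shows "holevo_cost G C = G$1$1 * Re (C$1$1) + 2 * G$1$2 * Re (C$1$2) + G$2$2 * Re (C$2$2)
                           + 2 * sqrt (det G) * \<bar>Im (C$1$2)\<bar>"
proof -
  have "Im (C$1$1) = 0" "Im (C$2$2) = 0" "Im (C$2$1) = - Im (C$1$2)" "Re (C$2$1) = Re (C$1$2)"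
    using C[of 1 1] C[of 2 2] C[of 1 2] by (simp_all add: complex_eq_iff)
  moreover have "mtr (mabs (msqrt G ** mIm C ** msqrt G)) = 2 * sqrt (det G) * \<bar>Im (C$1$2)\<bar>"
    using calculation by (subst mtr_mabs_antisym_2[OF G]) (simp_all add: mIm_def)
  ultimately show ?thesis
    using real_pos_def_2_entries(1)[OF G]
    by (simp add: holevo_cost_def mtr_def sum_2 matrix_matrix_mult_def cmat_def)
qed

section \<open>The sesquilinear forms \<open>(X, Y) \<mapsto> tr (X\<^sup>* L\<^sub>\<beta> Y)\<close>\<close>

definition beta_form :: "complex^'n^'n \<Rightarrow> real \<Rightarrow> complex^'n^'n \<Rightarrow> complex^'n^'n \<Rightarrow> complex" where
  "beta_form \<rho> \<beta> X Y = mtr (cadj X ** lr_mult \<rho> ((1 + \<beta>) / 2) ((1 - \<beta>) / 2) Y)"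

lemma beta_form_add_left: "beta_form \<rho> \<beta> (X1 + X2) Y = beta_form \<rho> \<beta> X1 Y + beta_form \<rho> \<beta> X2 Y"
  by (simp add: beta_form_def cadj_add matrix_add_rdistrib mtr_add)

lemma beta_form_add_right: "beta_form \<rho> \<beta> X (Y1 + Y2) = beta_form \<rho> \<beta> X Y1 + beta_form \<rho> \<beta> X Y2"
  by (simp add: beta_form_def lr_mult_add matrix_add_ldistrib mtr_add)

lemma beta_form_diff_left: "beta_form \<rho> \<beta> (X1 - X2) Y = beta_form \<rho> \<beta> X1 Y - beta_form \<rho> \<beta> X2 Y"
  by (simp add: beta_form_def cadj_diff matrix_diff_rdistrib mtr_diff)

lemma beta_form_diff_right: "beta_form \<rho> \<beta> X (Y1 - Y2) = beta_form \<rho> \<beta> X Y1 - beta_form \<rho> \<beta> X Y2"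
  by (simp add: beta_form_def lr_mult_diff matrix_diff_ldistrib mtr_diff)

lemma beta_form_cscale_left: "beta_form \<rho> \<beta> (cscale a X) Y = cnj a * beta_form \<rho> \<beta> X Y"
  by (simp add: beta_form_def cadj_cscale cscale_mult_left[symmetric] mtr_cscale)

lemma beta_form_cscale_right: "beta_form \<rho> \<beta> X (cscale a Y) = a * beta_form \<rho> \<beta> X Y"
  by (simp add: beta_form_def lr_mult_cscale cscale_mult_right[symmetric] mtr_cscale)

lemma beta_form_eq:
  "beta_form \<rho> \<beta> X Y = complex_of_real ((1 + \<beta>) / 2) * mtr (cadj X ** (\<rho> ** Y))
                       + complex_of_real ((1 - \<beta>) / 2) * mtr (cadj X ** (Y ** \<rho>))"
  by (simp add: beta_form_def lr_mult_def matrix_add_ldistrib mtr_add cscale_mult_right[symmetric] mtr_cscale)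

lemma beta_form_cnj:
  assumes "hermitian \<rho>"
  shows "beta_form \<rho> \<beta> Y X = cnj (beta_form \<rho> \<beta> X Y)"
proof -
  have "cnj (mtr (cadj X ** (\<rho> ** Y))) = mtr (cadj Y ** (\<rho> ** X))"
    using assms by (simp add: mtr_cadj[symmetric] cadj_mult hermitian_def matrix_mul_assoc)
  moreover have "cnj (mtr (cadj X ** (Y ** \<rho>))) = mtr (cadj Y ** (X ** \<rho>))"
    using assms mtr_mult_commute[of "\<rho>" "cadj Y ** X"]
    by (simp add: mtr_cadj[symmetric] cadj_mult hermitian_def matrix_mul_assoc)
  ultimately show ?thesis
    unfolding beta_form_eq by simp
qed

lemma beta_form_nonneg:
  assumes "strictly_pos \<rho>" "0 \<le> \<beta>" "\<beta> \<le> 1"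
  shows "0 \<le> Re (beta_form \<rho> \<beta> V V)"
proof -
  have "Re (beta_form \<rho> \<beta> V V) = (1 + \<beta>) / 2 * Re (mtr (cadj V ** (\<rho> ** V)))
                                  + (1 - \<beta>) / 2 * Re (mtr (cadj V ** (V ** \<rho>)))"
    unfolding beta_form_eq by simp
  also have "\<dots> \<ge> 0"
    using assms(2,3) mtr_cadj_sandwich_nonneg[OF assms(1), of V]
      mtr_cadj_sandwich_right_nonneg[OF assms(1), of V]
    by (intro add_nonneg_nonneg mult_nonneg_nonneg) auto
  finally show ?thesis .
qed

lemma Zmat_hermitian:
  assumes "hermitian \<rho>" "\<forall>j. hermitian (B j)"
  shows "(Zmat \<rho> B)$j$i = cnj ((Zmat \<rho> B)$i$j)"
proof -
  have "cnj ((Zmat \<rho> B)$i$j) = mtr (B i ** B j ** \<rho>)"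
    using assms by (simp add: Zmat_def mtr_cadj[symmetric] cadj_mult hermitian_def matrix_mul_assoc)
  also have "\<dots> = (Zmat \<rho> B)$j$i"
    using mtr_mult_commute[of "B i ** B j" \<rho>] by (simp add: Zmat_def matrix_mul_assoc)
  finally show ?thesis
    by simp
qed

lemma beta_form_Zmat:
  assumes "hermitian (B i)"
  shows "beta_form \<rho> \<beta> (B i) (B j) = complex_of_real ((1 + \<beta>) / 2) * (Zmat \<rho> B)$i$j
                                    + complex_of_real ((1 - \<beta>) / 2) * (Zmat \<rho> B)$j$i"
proof -
  have "mtr (B i ** (\<rho> ** B j)) = (Zmat \<rho> B)$i$j"
    using mtr_mult_commute[of "B i" "\<rho> ** B j"] by (simp add: Zmat_def)
  moreover have "mtr (B i ** (B j ** \<rho>)) = (Zmat \<rho> B)$j$i"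
    using mtr_mult_commute[of "B i ** B j" \<rho>] by (simp add: Zmat_def matrix_mul_assoc)
  ultimately show ?thesis
    using assms unfolding beta_form_eq hermitian_def by simp
qed

lemma Zmat_eq_sld_inner:
  assumes "strictly_pos \<rho>"
  shows "(Zmat \<rho> B)$i$j = sld_inner \<rho> (B j) (B i) - \<i> * sld_inner \<rho> (B j) (comm_op \<rho> (B i))"
  unfolding Zmat_def using mtr_rho_mult_eq_sld_inner[OF assms] by (simp add: matrix_mul_assoc)

definition levi_civita :: "2 \<Rightarrow> 2 \<Rightarrow> real" where
  "levi_civita i j = (if i = 1 \<and> j = 2 then 1 else if i = 2 \<and> j = 1 then -1 else 0)"

section \<open>A three-dimensional \<open>\<D>\<close>-invariant space containing the SLDs\<close>

locale D_invariant_extension =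
  fixes \<rho> :: "complex^'n^'n" and dR :: "2 \<Rightarrow> complex^'n^'n" and T :: "(complex^'n^'n) set"
  assumes strictly_pos: "strictly_pos \<rho>"
    and sld_independent:
      "\<forall>a b::real. a *\<^sub>R logder 0 \<rho> (dR 1) + b *\<^sub>R logder 0 \<rho> (dR 2) = 0 \<longrightarrow> a = 0 \<and> b = 0"
    and subspace_T: "subspace T" and dim_T: "dim T = 3" and hermitian_T: "\<forall>X\<in>T. hermitian X"
    and span_sld_subset_T: "span {logder 0 \<rho> (dR 1), logder 0 \<rho> (dR 2)} \<subseteq> T"
    and comm_op_T: "comm_op \<rho> ` T \<subseteq> T"
begin

abbreviation "e1 \<equiv> logder 0 \<rho> (dR 1)"
abbreviation "e2 \<equiv> logder 0 \<rho> (dR 2)"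
abbreviation "D \<equiv> comm_op \<rho>"
abbreviation "g \<equiv> sld_inner \<rho>"

lemma hermitian_rho: "hermitian \<rho>"
  using strictly_pos strictly_pos_def by blast

lemma sld_in_T: "logder 0 \<rho> (dR k) \<in> T"
  using span_sld_subset_T span_base[of "logder 0 \<rho> (dR k)" "{e1, e2}"] exhaust_2[of k] by auto

lemma e1_in_T: "e1 \<in> T" and e2_in_T: "e2 \<in> T"
  by (rule sld_in_T)+

lemma comm_op_in_T: "X \<in> T \<Longrightarrow> D X \<in> T"
  using comm_op_T by auto

lemma scaleR_in_T: "X \<in> T \<Longrightarrow> c *\<^sub>R X \<in> T"
  using subspace_T by (simp add: subspace_scale)

lemma dR_eq_jordan_mult: "dR k = jordan_mult \<rho> (logder 0 \<rho> (dR k))"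
  using jordan_mult_logder_0[OF strictly_pos] by simp

lemma dR_hermitian: "hermitian (dR k)"
proof -
  have "hermitian (logder 0 \<rho> (dR k))"
    using hermitian_T sld_in_T by blast
  then have "hermitian (jordan_mult \<rho> (logder 0 \<rho> (dR k)))"
    by (rule jordan_mult_hermitian[OF hermitian_rho])
  then show ?thesis
    by (simp only: dR_eq_jordan_mult[symmetric])
qed

lemma sld_inner_T_real: "X \<in> T \<Longrightarrow> Y \<in> T \<Longrightarrow> g X Y = complex_of_real (Re (g X Y))"
  using sld_inner_real[OF hermitian_rho, of X Y] hermitian_T
  by (metis complex_is_Real_iff Reals_cnj_iff of_real_Re)

text \<open>The SLD Fisher information \<open>J\<^sup>(\<^sup>S\<^sup>)\<close>: \<open>tr (\<partial>\<^sub>k\<rho> L\<^sub>l) = g (L\<^sub>k, L\<^sub>l)\<close> is real.\<close>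

definition JS :: "real^2^2" where
  "JS = (\<chi> k l. Re (g (logder 0 \<rho> (dR k)) (logder 0 \<rho> (dR l))))"

lemma JS_pos_def: "real_pos_def JS"
  unfolding real_pos_def_def
proof (intro conjI allI impI)
  show "transpose JS = JS"
    by (simp add: JS_def transpose_def vec_eq_iff sld_inner_commute)
next
  fix x :: "real^2"
  assume "x \<noteq> 0"
  define X where "X = x$1 *\<^sub>R e1 + x$2 *\<^sub>R e2"
  have "X \<in> T"
    unfolding X_def using e1_in_T e2_in_T subspace_T by (simp add: subspace_add scaleR_in_T)
  moreover have "X \<noteq> 0"
  proof
    assume "X = 0"
    then have "x$1 = 0" "x$2 = 0"
      using sld_independent unfolding X_def by blast+
    then show False
      using \<open>x \<noteq> 0\<close> by (metis exhaust_2 vec_eq_iff zero_index)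
  qed
  moreover have "Re (g X X) = x \<bullet> (JS *v x)"
    unfolding X_def scaleR_eq_cscale
    by (simp add: sld_inner_add_left sld_inner_add_right sld_inner_cscale_left sld_inner_cscale_right
        inner_vec_def sum_2 matrix_vector_mult_def JS_def algebra_simps)
  ultimately show "0 < x \<bullet> (JS *v x)"
    using sld_inner_pos[OF strictly_pos] hermitian_T by fastforce
qed

definition "J11 = JS$1$1"
definition "J12 = JS$1$2"
definition "J22 = JS$2$2"
definition "detJ = J11 * J22 - J12 * J12"

lemma J_pos: "0 < J11" "0 < J22" "0 < detJ"
  using real_pos_def_2_entries[OF JS_pos_def] unfolding J11_def J12_def J22_def detJ_def det_2 by auto

lemma sld_inner_e1_e1: "g e1 e1 = complex_of_real J11"
  using sld_inner_T_real[OF e1_in_T e1_in_T] by (simp add: J11_def JS_def)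

lemma sld_inner_e1_e2: "g e1 e2 = complex_of_real J12"
  using sld_inner_T_real[OF e1_in_T e2_in_T] by (simp add: J12_def JS_def)

lemma sld_inner_e2_e1: "g e2 e1 = complex_of_real J12"
  using sld_inner_e1_e2 sld_inner_commute by metis

lemma sld_inner_e2_e2: "g e2 e2 = complex_of_real J22"
  using sld_inner_T_real[OF e2_in_T e2_in_T] by (simp add: J22_def JS_def)

lemma independent_sld:
  "independent {e1, e2}" "e1 \<noteq> e2"
proof -
  have "e2 \<noteq> 0"
    using sld_independent[rule_format, of 0 1] by auto
  moreover have "e1 \<notin> span {e2}"
  proof
    assume "e1 \<in> span {e2}"
    then obtain c where "e1 = c *\<^sub>R e2"
      by (auto simp: span_singleton)
    then show False
      using sld_independent[rule_format, of 1 "-c"] by simp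
  qed
  ultimately show "independent {e1, e2}"
    by (intro real_vector.independent_insertI) (auto simp: real_vector.independent_empty)
  show "e1 \<noteq> e2"
    using sld_independent[rule_format, of 1 "-1"] by auto
qed

lemma T_not_subset_span_sld: "\<exists>h\<in>T. h \<notin> span {e1, e2}"
proof (rule ccontr)
  assume "\<not> (\<exists>h\<in>T. h \<notin> span {e1, e2})"
  then have "T \<subseteq> span {e1, e2}"
    by blast
  then have "dim T \<le> card {e1, e2}"
    by (rule dim_le_card) simp
  also have "\<dots> \<le> 2"
    by (simp add: card_insert_if)
  finally show False
    using dim_T by simp
qed

lemma exists_orthogonal_complement:
  "\<exists>f\<in>T. f \<notin> span {e1, e2} \<and> g e1 f = 0 \<and> g e2 f = 0"
proof -
  obtain h where h: "h \<in> T" "h \<notin> span {e1, e2}"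
    using T_not_subset_span_sld by blast
  define a where "a = (J22 * Re (g e1 h) - J12 * Re (g e2 h)) / detJ"
  define b where "b = (J11 * Re (g e2 h) - J12 * Re (g e1 h)) / detJ"
  define f where "f = h - a *\<^sub>R e1 - b *\<^sub>R e2"
  have "f \<in> T"
    unfolding f_def using h(1) e1_in_T e2_in_T subspace_T by (simp add: subspace_diff scaleR_in_T)
  moreover have "f \<notin> span {e1, e2}"
  proof
    assume "f \<in> span {e1, e2}"
    then have "f + a *\<^sub>R e1 + b *\<^sub>R e2 \<in> span {e1, e2}"
      by (simp add: span_add span_scale span_base)
    then show False
      using h(2) by (simp add: f_def)
  qed
  moreover have "g e1 f = g e1 h - complex_of_real (a * J11 + b * J12)"
    unfolding f_def scaleR_eq_cscale
    by (simp add: sld_inner_diff_right sld_inner_cscale_right sld_inner_e1_e1 sld_inner_e1_e2)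
  then have "g e1 f = complex_of_real (Re (g e1 h) - a * J11 - b * J12)"
    using sld_inner_T_real[OF e1_in_T h(1)] by simp
  moreover have "g e2 f = g e2 h - complex_of_real (a * J12 + b * J22)"
    unfolding f_def scaleR_eq_cscale
    by (simp add: sld_inner_diff_right sld_inner_cscale_right sld_inner_e2_e1 sld_inner_e2_e2)
  then have "g e2 f = complex_of_real (Re (g e2 h) - a * J12 - b * J22)"
    using sld_inner_T_real[OF e2_in_T h(1)] by simp
  moreover have "Re (g e1 h) - a * J11 - b * J12 = 0" "Re (g e2 h) - a * J12 - b * J22 = 0"
    using J_pos(3) unfolding a_def b_def detJ_def by (simp_all add: field_simps)
  ultimately show ?thesis
    by auto
qed

definition "e3 = (SOME f. f \<in> T \<and> f \<notin> span {e1, e2} \<and> g e1 f = 0 \<and> g e2 f = 0)"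

lemma e3: "e3 \<in> T" "e3 \<notin> span {e1, e2}" "g e1 e3 = 0" "g e2 e3 = 0"
  using someI_ex[OF exists_orthogonal_complement[unfolded Bex_def]] unfolding e3_def by auto

lemma sld_inner_e3_e1: "g e3 e1 = 0" and sld_inner_e3_e2: "g e3 e2 = 0"
  using e3 sld_inner_commute by metis+

definition "n3 = Re (g e3 e3)"

lemma n3_pos: "0 < n3"
proof -
  have "e3 \<noteq> 0"
    using e3(2) span_zero by metis
  then show ?thesis
    using sld_inner_pos[OF strictly_pos] hermitian_T e3(1) by (simp add: n3_def)
qed

lemma sld_inner_e3_e3: "g e3 e3 = complex_of_real n3"
  using sld_inner_T_real[OF e3(1) e3(1)] by (simp add: n3_def)

lemma T_subset_span_basis: "T \<subseteq> span {e3, e1, e2}"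
proof (rule card_ge_dim_independent)
  show "{e3, e1, e2} \<subseteq> T"
    using e3(1) e1_in_T e2_in_T by auto
  show "independent {e3, e1, e2}"
    by (rule real_vector.independent_insertI[OF e3(2) independent_sld(1)])
  have "e3 \<noteq> e1" "e3 \<noteq> e2"
    using e3(2) span_base[of e1 "{e1, e2}"] span_base[of e2 "{e1, e2}"] by auto
  then show "dim T \<le> card {e3, e1, e2}"
    using independent_sld(2) dim_T by simp
qed

lemma T_coords: "X \<in> T \<Longrightarrow> \<exists>a b c. X = a *\<^sub>R e1 + b *\<^sub>R e2 + c *\<^sub>R e3"
proof -
  assume "X \<in> T"
  then have "X \<in> span (insert e3 {e1, e2})"
    using T_subset_span_basis by auto
  then obtain c where "X - c *\<^sub>R e3 \<in> span {e1, e2}"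
    by (auto simp: span_insert)
  then have "\<exists>a b. X - c *\<^sub>R e3 = a *\<^sub>R e1 + b *\<^sub>R e2"
    by (auto simp: span_insert span_singleton) (metis add.commute diff_add_cancel)
  then obtain a b where "X - c *\<^sub>R e3 = a *\<^sub>R e1 + b *\<^sub>R e2"
    by blast
  then have "X = a *\<^sub>R e1 + b *\<^sub>R e2 + c *\<^sub>R e3"
    by (simp add: algebra_simps)
  then show ?thesis
    by blast
qed

definition in_cspan :: "complex^'n^'n \<Rightarrow> bool" where
  "in_cspan X \<longleftrightarrow> (\<exists>a b c. X = cscale a e1 + cscale b e2 + cscale c e3)"

lemma in_cspan_T: "X \<in> T \<Longrightarrow> in_cspan X"
  unfolding in_cspan_def using T_coords by (metis scaleR_eq_cscale)

lemma in_cspan_add: "in_cspan X \<Longrightarrow> in_cspan Y \<Longrightarrow> in_cspan (X + Y)"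
proof -
  assume "in_cspan X" "in_cspan Y"
  then obtain a b c a' b' c' where
    "X = cscale a e1 + cscale b e2 + cscale c e3" "Y = cscale a' e1 + cscale b' e2 + cscale c' e3"
    unfolding in_cspan_def by blast
  then have "X + Y = cscale (a + a') e1 + cscale (b + b') e2 + cscale (c + c') e3"
    by (simp add: cscale_add_left algebra_simps)
  then show ?thesis
    unfolding in_cspan_def by blast
qed

lemma in_cspan_cscale: "in_cspan X \<Longrightarrow> in_cspan (cscale k X)"
proof -
  assume "in_cspan X"
  then obtain a b c where "X = cscale a e1 + cscale b e2 + cscale c e3"
    unfolding in_cspan_def by blast
  then have "cscale k X = cscale (k * a) e1 + cscale (k * b) e2 + cscale (k * c) e3"
    by (simp add: cscale_add cscale_cscale)
  then show ?thesis
    unfolding in_cspan_def by blast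
qed

lemma in_cspan_diff: "in_cspan X \<Longrightarrow> in_cspan Y \<Longrightarrow> in_cspan (X - Y)"
  using in_cspan_add[of X "cscale (-1) Y"] in_cspan_cscale[of Y "-1"] by (simp add: cscale_neg)

lemma comm_op_coords:
  "D (cscale a e1 + cscale b e2 + cscale c e3) = cscale a (D e1) + cscale b (D e2) + cscale c (D e3)"
  by (simp add: comm_op_add[OF strictly_pos] comm_op_cscale[OF strictly_pos])

lemma in_cspan_comm_op: "in_cspan X \<Longrightarrow> in_cspan (D X)"
proof -
  assume "in_cspan X"
  then obtain a b c where "X = cscale a e1 + cscale b e2 + cscale c e3"
    unfolding in_cspan_def by blast
  moreover have "in_cspan (D e1)" "in_cspan (D e2)" "in_cspan (D e3)"
    using comm_op_in_T e1_in_T e2_in_T e3(1) in_cspan_T by auto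
  ultimately show ?thesis
    by (simp add: comm_op_coords in_cspan_add in_cspan_cscale)
qed

lemma sld_inner_coords:
  "g e1 (cscale a e1 + cscale b e2 + cscale c e3) = a * complex_of_real J11 + b * complex_of_real J12"
  "g e2 (cscale a e1 + cscale b e2 + cscale c e3) = a * complex_of_real J12 + b * complex_of_real J22"
  "g e3 (cscale a e1 + cscale b e2 + cscale c e3) = c * complex_of_real n3"
  by (simp_all add: sld_inner_add_right sld_inner_cscale_right sld_inner_e1_e1 sld_inner_e1_e2
      sld_inner_e2_e1 sld_inner_e2_e2 e3(3,4) sld_inner_e3_e1 sld_inner_e3_e2 sld_inner_e3_e3)

lemma in_cspan_orthogonal_eq_0:
  assumes "in_cspan X" "g e1 X = 0" "g e2 X = 0" "g e3 X = 0"
  shows "X = 0"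
proof -
  obtain a b c where X: "X = cscale a e1 + cscale b e2 + cscale c e3"
    using assms(1) unfolding in_cspan_def by blast
  have c: "c = 0"
    using assms(4) n3_pos unfolding X sld_inner_coords by simp
  have 1: "a * complex_of_real J11 + b * complex_of_real J12 = 0"
    and 2: "a * complex_of_real J12 + b * complex_of_real J22 = 0"
    using assms(2,3) unfolding X sld_inner_coords by simp_all
  have "a * complex_of_real detJ
      = complex_of_real J22 * (a * complex_of_real J11 + b * complex_of_real J12)
        - complex_of_real J12 * (a * complex_of_real J12 + b * complex_of_real J22)"
    by (simp add: detJ_def algebra_simps)
  then have a: "a = 0"
    using 1 2 J_pos(3) by simp
  have "b * complex_of_real detJ
      = complex_of_real J11 * (a * complex_of_real J12 + b * complex_of_real J22)
        - complex_of_real J12 * (a * complex_of_real J11 + b * complex_of_real J12)"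
    by (simp add: detJ_def algebra_simps)
  then have b: "b = 0"
    using 1 2 J_pos(3) by simp
  show ?thesis
    unfolding X a b c by simp
qed

text \<open>\<open>\<D>\<close> is skew-adjoint for \<open>g\<close>, so on \<open>T\<close> it is determined by these three entries.\<close>

definition "d12 = Re (g e1 (D e2))"
definition "d13 = Re (g e1 (D e3))"
definition "d23 = Re (g e2 (D e3))"

lemma sld_inner_comm_op_basis:
  "g e1 (D e1) = 0" "g e2 (D e2) = 0" "g e3 (D e3) = 0"
  "g e1 (D e2) = complex_of_real d12" "g e2 (D e1) = - complex_of_real d12"
  "g e1 (D e3) = complex_of_real d13" "g e3 (D e1) = - complex_of_real d13"
  "g e2 (D e3) = complex_of_real d23" "g e3 (D e2) = - complex_of_real d23"
  using sld_inner_comm_op_self[OF strictly_pos] sld_inner_comm_op_antisym[OF strictly_pos]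
    sld_inner_T_real[OF _ comm_op_in_T] e1_in_T e2_in_T e3(1)
  unfolding d12_def d13_def d23_def by metis+

lemma sld_inner_comm_op_coords:
  "g e1 (D (cscale a e1 + cscale b e2 + cscale c e3)) = b * complex_of_real d12 + c * complex_of_real d13"
  "g e2 (D (cscale a e1 + cscale b e2 + cscale c e3)) = - a * complex_of_real d12 + c * complex_of_real d23"
  "g e3 (D (cscale a e1 + cscale b e2 + cscale c e3)) = - a * complex_of_real d13 - b * complex_of_real d23"
  unfolding comm_op_coords
  by (simp_all add: sld_inner_add_right sld_inner_cscale_right sld_inner_comm_op_basis)

definition JS_inv :: "2 \<Rightarrow> 2 \<Rightarrow> real" where
  "JS_inv i j = (if i = 1 \<and> j = 1 then J22 else if i = 2 \<and> j = 2 then J11 else - J12) / detJ"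

text \<open>The coordinates of the \<open>g\<close>-projection of \<open>\<D> e3\<close> onto \<open>span {e1, e2}\<close>.\<close>

definition u :: "2 \<Rightarrow> real" where
  "u i = (if i = 1 then (J22 * d13 - J12 * d23) / detJ else (J11 * d23 - J12 * d13) / detJ)"

lemma JS_inv_commute: "JS_inv i j = JS_inv j i"
  unfolding JS_inv_def by auto

lemma JS_mult_JS_inv:
  "J11 * JS_inv 1 m + J12 * JS_inv 2 m = (if m = 1 then 1 else 0)"
  "J12 * JS_inv 1 m + J22 * JS_inv 2 m = (if m = 2 then 1 else 0)"
  using J_pos(3) exhaust_2[of m] unfolding JS_inv_def
  by (auto simp: field_simps) (simp_all add: detJ_def algebra_simps)

lemma JS_inv_det: "JS_inv 1 1 * JS_inv 2 2 - JS_inv 1 2 * JS_inv 2 1 = 1 / detJ"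
  using J_pos(3) unfolding JS_inv_def by (simp add: field_simps) (simp add: detJ_def power2_eq_square algebra_simps)

lemma u_eq: "u m = JS_inv 1 m * d13 + JS_inv 2 m * d23"
  using J_pos(3) exhaust_2[of m] unfolding JS_inv_def u_def by (auto simp: field_simps)

lemma JS_mult_u: "J11 * u 1 + J12 * u 2 = d13" "J12 * u 1 + J22 * u 2 = d23"
  using J_pos(3) unfolding u_def by (simp_all add: field_simps) (simp_all add: detJ_def algebra_simps)

lemma levi_civita_mult_JS:
  "d12 / detJ * (levi_civita 1 m * J11 + levi_civita 2 m * J12) = d12 * JS_inv 2 m"
  "d12 / detJ * (levi_civita 1 m * J12 + levi_civita 2 m * J22) = - d12 * JS_inv 1 m"
  using J_pos(3) exhaust_2[of m] unfolding JS_inv_def levi_civita_def by (auto simp: field_simps)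

definition J_inv :: "real \<Rightarrow> complex^2^2" where
  "J_inv \<beta> = (\<chi> i j. Complex (JS_inv i j - \<beta>\<^sup>2 / n3 * u i * u j) (\<beta> * d12 / detJ * levi_civita i j))"

lemma J_inv_nth: "(J_inv \<beta>)$i$j = Complex (JS_inv i j - \<beta>\<^sup>2 / n3 * u i * u j) (\<beta> * d12 / detJ * levi_civita i j)"
  by (simp add: J_inv_def)

lemma J_inv_hermitian: "(J_inv \<beta>)$j$i = cnj ((J_inv \<beta>)$i$j)"
  using exhaust_2[of i] exhaust_2[of j] JS_inv_commute[of 1 2]
  by (auto simp: J_inv_nth levi_civita_def complex_eq_iff)

text \<open>\<open>\<Sum>\<^sub>k (J\<^sup>(\<^sup>\<beta>\<^sup>)\<^sup>-\<^sup>1)\<^sub>k\<^sub>m L\<^sub>k\<^sup>(\<^sup>\<beta>\<^sup>)\<close>, written in the complexified basis of \<open>T\<close>.\<close>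

definition dual_logder :: "real \<Rightarrow> 2 \<Rightarrow> complex^'n^'n" where
  "dual_logder \<beta> m = cscale (complex_of_real (JS_inv 1 m)) e1 + cscale (complex_of_real (JS_inv 2 m)) e2
     + cscale (\<i> * complex_of_real (\<beta> * u m / n3)) e3"

lemma sld_inner_dual_logder: "g (logder 0 \<rho> (dR k)) (dual_logder \<beta> m) = (if k = m then 1 else 0)"
  using exhaust_2[of k] exhaust_2[of m] JS_mult_JS_inv[of m]
  by (auto simp: dual_logder_def sld_inner_coords mult.commute simp flip: of_real_mult of_real_add)

lemma dual_logder_plus_comm_op_e1:
  "complex_of_real (JS_inv 1 m) * complex_of_real J11 + complex_of_real (JS_inv 2 m) * complex_of_real J12
    + \<i> * complex_of_real \<beta> * (complex_of_real (JS_inv 2 m) * complex_of_real d12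
                                + \<i> * complex_of_real (\<beta> * u m / n3) * complex_of_real d13)
   = (J_inv \<beta>)$1$m * complex_of_real J11 + (J_inv \<beta>)$2$m * complex_of_real J12"
proof -
  have "(JS_inv 1 m - \<beta>\<^sup>2 / n3 * u 1 * u m) * J11 + (JS_inv 2 m - \<beta>\<^sup>2 / n3 * u 2 * u m) * J12
      = JS_inv 1 m * J11 + JS_inv 2 m * J12 - \<beta>\<^sup>2 / n3 * u m * (J11 * u 1 + J12 * u 2)"
    by (simp add: algebra_simps)
  then have "JS_inv 1 m * J11 + JS_inv 2 m * J12 - \<beta> * (\<beta> * u m / n3 * d13)
      = (JS_inv 1 m - \<beta>\<^sup>2 / n3 * u 1 * u m) * J11 + (JS_inv 2 m - \<beta>\<^sup>2 / n3 * u 2 * u m) * J12"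
    unfolding JS_mult_u by (simp add: power2_eq_square algebra_simps)
  moreover have "\<beta> * (JS_inv 2 m * d12)
      = \<beta> * (d12 / detJ * (levi_civita 1 m * J11 + levi_civita 2 m * J12))"
    using levi_civita_mult_JS(1)[of m] by (simp add: mult.commute)
  ultimately show ?thesis
    using J_pos(3) by (simp add: complex_eq_iff J_inv_nth) (simp add: field_simps)
qed

lemma dual_logder_plus_comm_op_e2:
  "complex_of_real (JS_inv 1 m) * complex_of_real J12 + complex_of_real (JS_inv 2 m) * complex_of_real J22
    + \<i> * complex_of_real \<beta> * (- complex_of_real (JS_inv 1 m) * complex_of_real d12
                                + \<i> * complex_of_real (\<beta> * u m / n3) * complex_of_real d23)
   = (J_inv \<beta>)$1$m * complex_of_real J12 + (J_inv \<beta>)$2$m * complex_of_real J22"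
proof -
  have "(JS_inv 1 m - \<beta>\<^sup>2 / n3 * u 1 * u m) * J12 + (JS_inv 2 m - \<beta>\<^sup>2 / n3 * u 2 * u m) * J22
      = JS_inv 1 m * J12 + JS_inv 2 m * J22 - \<beta>\<^sup>2 / n3 * u m * (J12 * u 1 + J22 * u 2)"
    by (simp add: algebra_simps)
  then have "JS_inv 1 m * J12 + JS_inv 2 m * J22 - \<beta> * (\<beta> * u m / n3 * d23)
      = (JS_inv 1 m - \<beta>\<^sup>2 / n3 * u 1 * u m) * J12 + (JS_inv 2 m - \<beta>\<^sup>2 / n3 * u 2 * u m) * J22"
    unfolding JS_mult_u by (simp add: power2_eq_square algebra_simps)
  moreover have "- \<beta> * (JS_inv 1 m * d12)
      = \<beta> * (d12 / detJ * (levi_civita 1 m * J12 + levi_civita 2 m * J22))"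
    using levi_civita_mult_JS(2)[of m] by (simp add: mult.commute)
  ultimately show ?thesis
    using J_pos(3) by (simp add: complex_eq_iff J_inv_nth) (simp add: field_simps)
qed

lemma dual_logder_plus_comm_op_e3:
  "\<i> * complex_of_real (\<beta> * u m / n3) * complex_of_real n3
    + \<i> * complex_of_real \<beta> * (- complex_of_real (JS_inv 1 m) * complex_of_real d13
                                - complex_of_real (JS_inv 2 m) * complex_of_real d23) = 0"
  using u_eq[of m] n3_pos by (simp add: complex_eq_iff field_simps)

text \<open>Both sides lie in the complexification of \<open>T\<close>, so it suffices to compare their
  \<open>g\<close>-products with \<open>e1\<close>, \<open>e2\<close>, \<open>e3\<close>, which is done by the three lemmas above.\<close>

lemma dual_logder_plus_comm_op:
  "dual_logder \<beta> m + cscale (\<i> * complex_of_real \<beta>) (D (dual_logder \<beta> m))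
     = cscale ((J_inv \<beta>)$1$m) e1 + cscale ((J_inv \<beta>)$2$m) e2"
    (is "?Y + cscale ?c (D ?Y) = ?R")
proof -
  define X where "X = ?Y + cscale ?c (D ?Y) - ?R"
  have "in_cspan ?Y"
    unfolding in_cspan_def dual_logder_def by blast
  then have "in_cspan X"
    unfolding X_def using in_cspan_comm_op in_cspan_T e1_in_T e2_in_T
    by (intro in_cspan_diff in_cspan_add in_cspan_cscale) auto
  moreover have "g e X = g e ?Y + ?c * g e (D ?Y) - ((J_inv \<beta>)$1$m * g e e1 + (J_inv \<beta>)$2$m * g e e2)" for e
    unfolding X_def by (simp only: sld_inner_add_right sld_inner_diff_right sld_inner_cscale_right)
  ultimately show ?thesis
    using in_cspan_orthogonal_eq_0[of X] dual_logder_plus_comm_op_e1[of m \<beta>]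
      dual_logder_plus_comm_op_e2[of m \<beta>] dual_logder_plus_comm_op_e3[of \<beta> m]
    unfolding X_def
    by (simp add: dual_logder_def sld_inner_coords sld_inner_comm_op_coords sld_inner_e1_e1 sld_inner_e1_e2
        sld_inner_e2_e1 sld_inner_e2_e2 sld_inner_e3_e1 sld_inner_e3_e2)
qed

lemma logder_combination_eq_dual_logder:
  assumes "0 \<le> \<beta>" "\<beta> \<le> 1"
  shows "cscale ((J_inv \<beta>)$1$m) (logder \<beta> \<rho> (dR 1)) + cscale ((J_inv \<beta>)$2$m) (logder \<beta> \<rho> (dR 2))
       = dual_logder \<beta> m"
proof -
  let ?L = "lr_mult \<rho> ((1 + \<beta>) / 2) ((1 - \<beta>) / 2)"
  have "?L (cscale ((J_inv \<beta>)$1$m) (logder \<beta> \<rho> (dR 1)) + cscale ((J_inv \<beta>)$2$m) (logder \<beta> \<rho> (dR 2)))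
      = cscale ((J_inv \<beta>)$1$m) (dR 1) + cscale ((J_inv \<beta>)$2$m) (dR 2)"
    by (simp add: lr_mult_add lr_mult_cscale logder_eq[OF strictly_pos assms])
  also have "\<dots> = ?L (dual_logder \<beta> m)"
    unfolding lr_mult_eq_jordan_mult_comm_op[OF strictly_pos] dual_logder_plus_comm_op
      jordan_mult_add jordan_mult_cscale
    by (simp only: dR_eq_jordan_mult[symmetric])
  finally show ?thesis
    using lr_mult_inj[OF strictly_pos, of "(1 + \<beta>) / 2" "(1 - \<beta>) / 2"] assms by (simp add: inj_eq)
qed

lemma Jmat_mult_J_inv:
  assumes "0 \<le> \<beta>" "\<beta> \<le> 1"
  shows "Jmat \<beta> \<rho> dR ** J_inv \<beta> = mat 1"
proof -
  have "(Jmat \<beta> \<rho> dR ** J_inv \<beta>)$k$m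
      = mtr (dR k ** logder \<beta> \<rho> (dR 1)) * (J_inv \<beta>)$1$m + mtr (dR k ** logder \<beta> \<rho> (dR 2)) * (J_inv \<beta>)$2$m"
    for k m
    by (simp add: matrix_matrix_mult_def sum_2 Jmat_def)
  also have "\<dots> k m = mtr (dR k ** (cscale ((J_inv \<beta>)$1$m) (logder \<beta> \<rho> (dR 1))
                     + cscale ((J_inv \<beta>)$2$m) (logder \<beta> \<rho> (dR 2))))" for k m
    by (simp add: matrix_add_ldistrib mtr_add cscale_mult_right[symmetric] mtr_cscale mult.commute)
  also have "\<dots> k m = g (logder 0 \<rho> (dR k)) (dual_logder \<beta> m)" for k m
    unfolding logder_combination_eq_dual_logder[OF assms] sld_inner_def
    by (simp only: dR_eq_jordan_mult[symmetric])
  finally show ?thesis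
    by (simp add: vec_eq_iff sld_inner_dual_logder mat_def)
qed

lemma matrix_inv_Jmat:
  assumes "0 \<le> \<beta>" "\<beta> \<le> 1"
  shows "matrix_inv (Jmat \<beta> \<rho> dR) = J_inv \<beta>"
  by (rule matrix_inv_eqI[OF Jmat_mult_J_inv[OF assms]])

definition sld_cost :: "real^2^2 \<Rightarrow> real" where
  "sld_cost G = G$1$1 * JS_inv 1 1 + 2 * G$1$2 * JS_inv 1 2 + G$2$2 * JS_inv 2 2"

definition quad_u :: "real^2^2 \<Rightarrow> real" where
  "quad_u G = G$1$1 * (u 1)\<^sup>2 + 2 * G$1$2 * u 1 * u 2 + G$2$2 * (u 2)\<^sup>2"

definition "skew = d12 / detJ"

lemma quad_u_pos:
  assumes "real_pos_def G" "u 1 \<noteq> 0 \<or> u 2 \<noteq> 0"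
  shows "0 < quad_u G"
proof -
  have "vector [u 1, u 2] \<noteq> (0::real^2)"
    using assms(2) by (metis vector_2 zero_index)
  then have "0 < vector [u 1, u 2] \<bullet> (G *v vector [u 1, u 2])"
    using assms(1) unfolding real_pos_def_def by blast
  then show ?thesis
    using real_pos_def_2_entries(1)[OF assms(1)]
    unfolding inner_matrix_vector_mult_2 quad_u_def by (simp add: power2_eq_square algebra_simps)
qed

lemma Cbeta_eq:
  assumes G: "real_pos_def G" and "0 \<le> \<beta>" "\<beta> \<le> 1"
  shows "Cbeta \<beta> G \<rho> dR = sld_cost G - \<beta>\<^sup>2 * quad_u G / n3 + \<beta> * (2 * sqrt (det G) * \<bar>skew\<bar>)"
  unfolding Cbeta_eq_holevo_cost matrix_inv_Jmat[OF assms(2,3)] holevo_cost_hermitian_2[OF G J_inv_hermitian]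
  using assms(2) n3_pos JS_inv_commute[of 1 2]
  by (simp add: J_inv_nth levi_civita_def sld_cost_def quad_u_def skew_def abs_mult power2_eq_square field_simps)

lemma beta_hat_eq:
  assumes G: "real_pos_def G"
  shows "beta_hat G \<rho> dR = (if u 1 = 0 \<and> u 2 = 0 then \<infinity>
                            else ereal (2 * sqrt (det G) * \<bar>skew\<bar> / (2 * (quad_u G / n3))))"
proof -
  have J_inv_0_eq_iff: "J_inv 0 = cmat (mRe (J_inv 1)) \<longleftrightarrow> u 1 = 0 \<and> u 2 = 0"
  proof
    assume "J_inv 0 = cmat (mRe (J_inv 1))"
    then have diag: "(J_inv 0)$i$i = (cmat (mRe (J_inv 1)))$i$i" for i
      by simp
    have "u 1 * u 1 / n3 = 0" "u 2 * u 2 / n3 = 0"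
      using diag[of 1] diag[of 2] by (simp_all add: J_inv_nth cmat_def mRe_def complex_eq_iff)
    then show "u 1 = 0 \<and> u 2 = 0"
      using n3_pos by simp
  next
    assume "u 1 = 0 \<and> u 2 = 0"
    then have "u i = 0" for i
      using exhaust_2[of i] by auto
    then show "J_inv 0 = cmat (mRe (J_inv 1))"
      by (simp add: vec_eq_iff J_inv_nth cmat_def mRe_def complex_eq_iff)
  qed
  have "mtr (mabs (msqrt G ** mIm (J_inv 1) ** msqrt G)) = 2 * sqrt (det G) * \<bar>skew\<bar>"
    by (subst mtr_mabs_antisym_2[OF G]) (simp_all add: mIm_def J_inv_nth levi_civita_def skew_def)
  moreover have "Re (mtr (cmat G ** (J_inv 0 - cmat (mRe (J_inv 1))))) = quad_u G / n3"
    using n3_pos real_pos_def_2_entries(1)[OF G]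
    by (simp add: mtr_def sum_2 matrix_matrix_mult_def cmat_def mRe_def J_inv_nth quad_u_def
        power2_eq_square field_simps)
  moreover have "matrix_inv (Jmat 0 \<rho> dR) = J_inv 0" "matrix_inv (Jmat 1 \<rho> dR) = J_inv 1"
    by (simp_all add: matrix_inv_Jmat)
  ultimately show ?thesis
    by (simp add: beta_hat_def Let_def J_inv_0_eq_iff)
qed

lemma lr_mult_dual_logder:
  assumes "0 \<le> \<beta>" "\<beta> \<le> 1"
  shows "lr_mult \<rho> ((1 + \<beta>) / 2) ((1 - \<beta>) / 2) (dual_logder \<beta> m)
       = cscale ((J_inv \<beta>)$1$m) (dR 1) + cscale ((J_inv \<beta>)$2$m) (dR 2)"
  unfolding logder_combination_eq_dual_logder[OF assms, symmetric]
  by (simp add: lr_mult_add lr_mult_cscale logder_eq[OF strictly_pos assms])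

lemma beta_form_dual_logder_right:
  assumes "0 \<le> \<beta>" "\<beta> \<le> 1" and X: "\<And>j. mtr (cadj X ** dR j) = (if j = i then 1 else 0)"
  shows "beta_form \<rho> \<beta> X (dual_logder \<beta> m) = (J_inv \<beta>)$i$m"
  unfolding beta_form_def lr_mult_dual_logder[OF assms(1,2)]
  using exhaust_2[of i]
  by (auto simp: matrix_add_ldistrib mtr_add cscale_mult_right[symmetric] mtr_cscale X)

lemma mtr_cadj_dual_logder_dR: "mtr (cadj (dual_logder \<beta> k) ** dR j) = (if j = k then 1 else 0)"
proof -
  have "mtr (cadj (dual_logder \<beta> k) ** dR j) = cnj (mtr (cadj (dR j) ** dual_logder \<beta> k))"
    by (simp add: mtr_cadj[symmetric] cadj_mult)
  also have "\<dots> = cnj (g (logder 0 \<rho> (dR j)) (dual_logder \<beta> k))"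
    using dR_hermitian[of j] unfolding hermitian_def sld_inner_def
    by (simp only: dR_eq_jordan_mult[symmetric])
  finally show ?thesis
    by (simp add: sld_inner_dual_logder)
qed

context
  fixes B :: "2 \<Rightarrow> complex^'n^'n"
  assumes B_hermitian: "\<forall>j. hermitian (B j)"
    and B_unbiased: "\<forall>i j. mtr (dR i ** B j) = (if i = j then 1 else 0)"
begin

lemma mtr_cadj_B_dR: "mtr (cadj (B i) ** dR j) = (if j = i then 1 else 0)"
  using B_hermitian B_unbiased mtr_mult_commute[of "B i" "dR j"] unfolding hermitian_def by simp

text \<open>Positivity of \<open>tr (V\<^sup>* L\<^sub>\<beta> V)\<close> for \<open>V = \<Sum>\<^sub>i a\<^sub>i (B\<^sub>i - Y\<^sub>i)\<close>, with \<open>Y\<^sub>i\<close> the dual vectors of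
  the \<open>\<beta>\<close>-logarithmic derivatives, yields \<open>[tr (B\<^sub>i\<^sup>* L\<^sub>\<beta> B\<^sub>j)] \<ge> (J\<^sup>(\<^sup>\<beta>\<^sup>))\<^sup>-\<^sup>1\<close>.\<close>

lemma beta_form_B_minus_J_inv_psd:
  assumes "0 \<le> \<beta>" "\<beta> \<le> 1"
  defines "P \<equiv> \<lambda>i j. beta_form \<rho> \<beta> (B i) (B j) - (J_inv \<beta>)$i$j"
  shows "0 \<le> Re (cnj a * P 1 1 * a + cnj a * P 1 2 * b + cnj b * P 2 1 * a + cnj b * P 2 2 * b)"
proof -
  let ?V = "(cscale a (B 1) + cscale b (B 2)) - (cscale a (dual_logder \<beta> 1) + cscale b (dual_logder \<beta> 2))"
  have B_Y: "beta_form \<rho> \<beta> (B i) (dual_logder \<beta> m) = (J_inv \<beta>)$i$m" for i m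
    by (rule beta_form_dual_logder_right[OF assms(1,2) mtr_cadj_B_dR])
  have Y_Y: "beta_form \<rho> \<beta> (dual_logder \<beta> k) (dual_logder \<beta> m) = (J_inv \<beta>)$k$m" for k m
    by (rule beta_form_dual_logder_right[OF assms(1,2) mtr_cadj_dual_logder_dR])
  have Y_B: "beta_form \<rho> \<beta> (dual_logder \<beta> k) (B j) = (J_inv \<beta>)$k$j" for k j
    unfolding beta_form_cnj[OF hermitian_rho, of \<beta> "dual_logder \<beta> k" "B j"] B_Y J_inv_hermitian[of \<beta> k j] ..
  have "beta_form \<rho> \<beta> ?V ?V = cnj a * P 1 1 * a + cnj a * P 1 2 * b + cnj b * P 2 1 * a + cnj b * P 2 2 * b"
    unfolding P_def
    by (simp only: beta_form_add_left beta_form_add_right beta_form_diff_left beta_form_diff_right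
        beta_form_cscale_left beta_form_cscale_right B_Y Y_B Y_Y) (simp add: algebra_simps)
  then show ?thesis
    using beta_form_nonneg[OF strictly_pos assms(1,2), of ?V] by simp
qed

lemma Zmat_minus_J_inv_bound:
  fixes G :: "real^2^2"
  assumes G: "real_pos_def G" and \<beta>: "0 \<le> \<beta>" "\<beta> \<le> 1"
  shows "2 * sqrt (det G) * \<bar>\<beta> * Im (Zmat \<rho> B$1$2) - Im (J_inv \<beta>$1$2)\<bar>
       \<le> G$1$1 * (Re (Zmat \<rho> B$1$1) - Re (J_inv \<beta>$1$1))
          + 2 * G$1$2 * (Re (Zmat \<rho> B$1$2) - Re (J_inv \<beta>$1$2))
          + G$2$2 * (Re (Zmat \<rho> B$2$2) - Re (J_inv \<beta>$2$2))"
proof -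
  define Z C where "Z = Zmat \<rho> B" and "C = J_inv \<beta>"
  define P where "P = (\<lambda>i j. beta_form \<rho> \<beta> (B i) (B j) - C$i$j)"
  have Zh: "Z$j$i = cnj (Z$i$j)" and Ch: "C$j$i = cnj (C$i$j)" for i j
    unfolding Z_def C_def by (rule Zmat_hermitian[OF hermitian_rho B_hermitian] J_inv_hermitian)+
  have P: "P i j = complex_of_real ((1 + \<beta>) / 2) * Z$i$j + complex_of_real ((1 - \<beta>) / 2) * Z$j$i - C$i$j"
    for i j
    unfolding P_def Z_def using B_hermitian by (simp add: beta_form_Zmat)
  have "Im (Z$i$i) = 0" "Im (C$i$i) = 0" for i
    using arg_cong[OF Zh[of i i], of Im] arg_cong[OF Ch[of i i], of Im] by simp_all
  then have P_hermitian: "Im (P 1 1) = 0" "Im (P 2 2) = 0" "P 2 1 = cnj (P 1 2)"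
    unfolding P using Zh[of 1 2] Ch[of 1 2] by (simp_all add: complex_eq_iff)
  have "0 \<le> Re (cnj a * P 1 1 * a + cnj a * P 1 2 * b + cnj b * P 2 1 * a + cnj b * P 2 2 * b)" for a b
    unfolding P_def C_def by (rule beta_form_B_minus_J_inv_psd[OF \<beta>])
  note P_psd = hermitian_psd_2_entries[OF P_hermitian this]
  have "2 * sqrt (det G) * \<bar>Im (P 1 2)\<bar>
      \<le> G$1$1 * Re (P 1 1) + 2 * G$1$2 * Re (P 1 2) + G$2$2 * Re (P 2 2)"
    by (rule weighted_trace_ge_abs_im_2[OF G P_psd])
  moreover have "Re (P i j) = Re (Z$i$j) - Re (C$i$j)" for i j
    unfolding P using Zh[of i j] by (simp add: field_simps)
  moreover have "Im (P 1 2) = \<beta> * Im (Z$1$2) - Im (C$1$2)"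
    unfolding P using Zh[of 1 2] by (simp add: field_simps)
  ultimately show ?thesis
    unfolding Z_def C_def by simp
qed

lemma Cbeta_le_holevo_cost:
  assumes G: "real_pos_def G" and \<beta>: "0 \<le> \<beta>" "\<beta> \<le> 1"
  shows "Cbeta \<beta> G \<rho> dR \<le> holevo_cost G (Zmat \<rho> B)"
proof -
  define Z C s where "Z = Zmat \<rho> B" and "C = J_inv \<beta>" and "s = 2 * sqrt (det G)"
  define tr_Z tr_C where
    "tr_Z = G$1$1 * Re (Z$1$1) + 2 * G$1$2 * Re (Z$1$2) + G$2$2 * Re (Z$2$2)" and
    "tr_C = G$1$1 * Re (C$1$1) + 2 * G$1$2 * Re (C$1$2) + G$2$2 * Re (C$2$2)"
  have weighted: "s * \<bar>\<beta> * Im (Z$1$2) - Im (C$1$2)\<bar> \<le> tr_Z - tr_C"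
    using Zmat_minus_J_inv_bound[OF G \<beta>] unfolding s_def Z_def C_def tr_Z_def tr_C_def
    by (simp add: algebra_simps)
  have "\<bar>\<beta> * Im (Z$1$2)\<bar> \<le> \<bar>Im (Z$1$2)\<bar>"
    using \<beta> by (simp add: abs_mult mult_left_le_one_le)
  then have "\<bar>Im (C$1$2)\<bar> \<le> \<bar>\<beta> * Im (Z$1$2) - Im (C$1$2)\<bar> + \<bar>Im (Z$1$2)\<bar>"
    by linarith
  then have triangle: "s * \<bar>Im (C$1$2)\<bar> \<le> s * \<bar>\<beta> * Im (Z$1$2) - Im (C$1$2)\<bar> + s * \<bar>Im (Z$1$2)\<bar>"
    unfolding s_def distrib_left[symmetric]
    using real_pos_def_2_entries(4)[OF G] by (intro mult_left_mono) auto
  have "Cbeta \<beta> G \<rho> dR = tr_C + s * \<bar>Im (C$1$2)\<bar>"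
    unfolding Cbeta_eq_holevo_cost matrix_inv_Jmat[OF \<beta>] C_def s_def tr_C_def
    by (rule holevo_cost_hermitian_2[OF G J_inv_hermitian])
  also have "\<dots> \<le> tr_C + (s * \<bar>\<beta> * Im (Z$1$2) - Im (C$1$2)\<bar> + s * \<bar>Im (Z$1$2)\<bar>)"
    using triangle by (rule add_left_mono)
  also have "\<dots> \<le> tr_Z + s * \<bar>Im (Z$1$2)\<bar>"
    using weighted by simp
  also have "\<dots> = holevo_cost G (Zmat \<rho> B)"
    unfolding Z_def s_def tr_Z_def
    by (rule holevo_cost_hermitian_2[OF G Zmat_hermitian[OF hermitian_rho B_hermitian], symmetric])
  finally show ?thesis .
qed
end

definition B_family :: "real \<Rightarrow> real \<Rightarrow> 2 \<Rightarrow> complex^'n^'n" where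
  "B_family t1 t2 j = cscale (complex_of_real (JS_inv 1 j)) e1 + cscale (complex_of_real (JS_inv 2 j)) e2
      + cscale (complex_of_real (if j = 1 then t1 else t2)) e3"

lemma B_family_in_T: "B_family t1 t2 j \<in> T"
  unfolding B_family_def scaleR_eq_cscale[symmetric]
  using e1_in_T e2_in_T e3(1) subspace_T by (simp add: subspace_add scaleR_in_T)

lemma B_family_hermitian: "\<forall>j. hermitian (B_family t1 t2 j)"
  using B_family_in_T hermitian_T by blast

lemma B_family_unbiased: "\<forall>i j. mtr (dR i ** B_family t1 t2 j) = (if i = j then 1 else 0)"
proof (intro allI)
  fix i j
  have "mtr (dR i ** B_family t1 t2 j) = g (logder 0 \<rho> (dR i)) (B_family t1 t2 j)"
    unfolding sld_inner_def by (simp only: dR_eq_jordan_mult[symmetric])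
  also have "\<dots> = (if i = j then 1 else 0)"
    using exhaust_2[of i] exhaust_2[of j] JS_mult_JS_inv[of j]
    by (auto simp: B_family_def sld_inner_coords mult.commute simp flip: of_real_mult of_real_add)
  finally show "mtr (dR i ** B_family t1 t2 j) = (if i = j then 1 else 0)" .
qed

lemma sld_inner_left_coords:
  "g (cscale a e1 + cscale b e2 + cscale c e3) X = a * g e1 X + b * g e2 X + c * g e3 X"
  by (simp add: sld_inner_add_left sld_inner_cscale_left)

lemma sld_inner_B_family:
  "g (B_family t1 t2 j) (B_family t1 t2 i)
     = complex_of_real (JS_inv j i + n3 * (if j = 1 then t1 else t2) * (if i = 1 then t1 else t2))"
proof -
  have "g (B_family t1 t2 j) (B_family t1 t2 i)
      = complex_of_real (JS_inv 1 j * (JS_inv 1 i * J11 + JS_inv 2 i * J12)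
          + JS_inv 2 j * (JS_inv 1 i * J12 + JS_inv 2 i * J22)
          + n3 * (if j = 1 then t1 else t2) * (if i = 1 then t1 else t2))"
    unfolding B_family_def sld_inner_left_coords sld_inner_coords by (simp add: algebra_simps)
  also have "JS_inv 1 j * (JS_inv 1 i * J11 + JS_inv 2 i * J12) + JS_inv 2 j * (JS_inv 1 i * J12 + JS_inv 2 i * J22)
      = JS_inv j i"
    using exhaust_2[of i] exhaust_2[of j] JS_mult_JS_inv[of i] JS_inv_commute[of 1 2]
    by (auto simp: mult.commute)
  finally show ?thesis .
qed

lemma sld_inner_comm_op_B_family:
  "g (B_family t1 t2 2) (D (B_family t1 t2 1)) = complex_of_real (- skew + t1 * u 2 - t2 * u 1)"
proof -
  have "g (B_family t1 t2 2) (D (B_family t1 t2 1))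
      = complex_of_real (d12 * (JS_inv 1 2 * JS_inv 2 1 - JS_inv 2 2 * JS_inv 1 1)
          + t1 * (JS_inv 1 2 * d13 + JS_inv 2 2 * d23) - t2 * (JS_inv 1 1 * d13 + JS_inv 2 1 * d23))"
    unfolding B_family_def sld_inner_left_coords sld_inner_comm_op_coords by (simp add: algebra_simps)
  also have "JS_inv 1 2 * JS_inv 2 1 - JS_inv 2 2 * JS_inv 1 1 = - 1 / detJ"
    using JS_inv_det by (simp add: algebra_simps)
  finally show ?thesis
    by (simp add: u_eq skew_def)
qed

lemma Zmat_B_family:
  "(Zmat \<rho> (B_family t1 t2))$1$1 = complex_of_real (JS_inv 1 1 + n3 * t1 * t1)"
  "(Zmat \<rho> (B_family t1 t2))$2$2 = complex_of_real (JS_inv 2 2 + n3 * t2 * t2)"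
  "(Zmat \<rho> (B_family t1 t2))$1$2 = Complex (JS_inv 1 2 + n3 * t1 * t2) (skew - t1 * u 2 + t2 * u 1)"
  unfolding Zmat_eq_sld_inner[OF strictly_pos] sld_inner_B_family sld_inner_comm_op_B_family
    sld_inner_comm_op_self[OF strictly_pos]
  using JS_inv_commute[of 2 1] by (simp_all add: complex_eq_iff algebra_simps)

lemma holevo_cost_B_family:
  assumes G: "real_pos_def G"
  shows "holevo_cost G (Zmat \<rho> (B_family t1 t2))
       = sld_cost G + n3 * (G$1$1 * t1\<^sup>2 + 2 * G$1$2 * t1 * t2 + G$2$2 * t2\<^sup>2)
         + 2 * sqrt (det G) * \<bar>skew - t1 * u 2 + t2 * u 1\<bar>"
  unfolding holevo_cost_hermitian_2[OF G Zmat_hermitian[OF hermitian_rho B_family_hermitian]] Zmat_B_family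
  by (simp add: sld_cost_def power2_eq_square algebra_simps)

text \<open>The optimal estimators are found on the line \<open>t = \<mu> adj(G) (-u\<^sub>2, u\<^sub>1)\<close>.\<close>

definition B_line :: "real^2^2 \<Rightarrow> real \<Rightarrow> 2 \<Rightarrow> complex^'n^'n" where
  "B_line G \<mu> = B_family (\<mu> * (- G$2$2 * u 2 - G$1$2 * u 1)) (\<mu> * (G$1$2 * u 2 + G$1$1 * u 1))"

lemma holevo_cost_B_line:
  assumes G: "real_pos_def G"
  shows "holevo_cost G (Zmat \<rho> (B_line G \<mu>))
       = sld_cost G + n3 * \<mu>\<^sup>2 * det G * quad_u G + 2 * sqrt (det G) * \<bar>skew + \<mu> * quad_u G\<bar>"
  unfolding B_line_def holevo_cost_B_family[OF G]
  using real_pos_def_2_entries(1)[OF G]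
  by (simp add: det_2 quad_u_def power2_eq_square algebra_simps)

lemma quad_u_nonneg: "real_pos_def G \<Longrightarrow> 0 \<le> quad_u G"
  using quad_u_pos[of G] by (cases "u 1 = 0 \<and> u 2 = 0") (auto simp: quad_u_def)

lemma holevo_cost_B_line_scaled:
  assumes G: "real_pos_def G" and "0 \<le> \<beta>"
    and below: "\<beta> * quad_u G \<le> n3 * sqrt (det G) * \<bar>skew\<bar>"
  shows "holevo_cost G (Zmat \<rho> (B_line G (- sgn skew * \<beta> / (n3 * sqrt (det G)))))
       = sld_cost G + \<beta>\<^sup>2 * quad_u G / n3 + 2 * (sqrt (det G) * \<bar>skew\<bar>) - 2 * (\<beta> * quad_u G / n3)"
proof -
  define s Q \<mu> where "s = sqrt (det G)" and "Q = quad_u G" and "\<mu> = - sgn skew * \<beta> / (n3 * s)"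
  have s: "0 < s" "s * s = det G"
    using real_pos_def_2_entries(4)[OF G] unfolding s_def by simp_all
  have n3: "0 < n3"
    by (rule n3_pos)
  have cost: "holevo_cost G (Zmat \<rho> (B_line G \<mu>)) = sld_cost G + n3 * \<mu>\<^sup>2 * det G * Q + 2 * s * \<bar>skew + \<mu> * Q\<bar>"
    unfolding holevo_cost_B_line[OF G] s_def Q_def ..
  show ?thesis
  proof (cases "skew = 0")
    case True
    have "0 \<le> \<beta> * Q"
      using \<open>0 \<le> \<beta>\<close> quad_u_nonneg[OF G] unfolding Q_def by simp
    then have "\<beta> * Q = 0"
      using below True unfolding Q_def by simp
    then show ?thesis
      unfolding \<mu>_def[symmetric] s_def[symmetric] Q_def[symmetric] cost
      using True by (auto simp: power2_eq_square \<mu>_def)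
  next
    case False
    have sgn: "sgn skew * sgn skew = 1" "sgn skew * \<bar>skew\<bar> = skew"
      using False by (simp_all add: sgn_if)
    have "\<mu>\<^sup>2 = (sgn skew)\<^sup>2 * \<beta>\<^sup>2 / (n3 * s)\<^sup>2"
      unfolding \<mu>_def by (simp add: power_divide power_mult_distrib)
    also have "\<dots> = \<beta>\<^sup>2 / (n3\<^sup>2 * det G)"
      using sgn(1) s(2) by (simp add: power2_eq_square power_mult_distrib)
    finally have "n3 * \<mu>\<^sup>2 * det G * Q = \<beta>\<^sup>2 * Q / n3"
      using n3 real_pos_def_2_entries(4)[OF G] by (simp add: power2_eq_square field_simps)
    moreover have "skew + \<mu> * Q = sgn skew * (\<bar>skew\<bar> - \<beta> * Q / (n3 * s))"
      unfolding \<mu>_def using sgn(2) by (simp add: algebra_simps)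
    then have "\<bar>skew + \<mu> * Q\<bar> = \<bar>skew\<bar> - \<beta> * Q / (n3 * s)"
      using below False s(1) n3 unfolding Q_def s_def[symmetric]
      by (simp add: abs_mult pos_divide_le_eq mult.commute mult.left_commute)
    ultimately have "holevo_cost G (Zmat \<rho> (B_line G \<mu>))
        = sld_cost G + \<beta>\<^sup>2 * Q / n3 + 2 * s * (\<bar>skew\<bar> - \<beta> * Q / (n3 * s))"
      unfolding cost by simp
    also have "\<dots> = sld_cost G + \<beta>\<^sup>2 * Q / n3 + 2 * (s * \<bar>skew\<bar>) - 2 * (\<beta> * Q / n3)"
      using s(1) n3 by (simp add: field_simps)
    finally show ?thesis
      unfolding \<mu>_def s_def Q_def .
  qed
qed

text \<open>By \<open>beta_hat_eq\<close>, \<open>critical\<close> says that \<open>\<beta> = 1\<close> or \<open>\<beta> = \<beta>\<^sub>h\<^sub>a\<^sub>t\<close>.\<close>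

lemma holevo_cost_B_line_eq_Cbeta:
  assumes G: "real_pos_def G" and \<beta>: "0 \<le> \<beta>" "\<beta> \<le> 1"
    and below: "\<beta> * quad_u G \<le> n3 * sqrt (det G) * \<bar>skew\<bar>"
    and critical: "\<beta> = 1 \<or> \<beta> * quad_u G = n3 * sqrt (det G) * \<bar>skew\<bar>"
  shows "holevo_cost G (Zmat \<rho> (B_line G (- sgn skew * \<beta> / (n3 * sqrt (det G))))) = Cbeta \<beta> G \<rho> dR"
  unfolding holevo_cost_B_line_scaled[OF G \<beta>(1) below] Cbeta_eq[OF G \<beta>]
proof (cases "\<beta> = 1")
  case False
  then have h: "sqrt (det G) * \<bar>skew\<bar> = \<beta> * quad_u G / n3"
    using critical n3_pos by (simp add: field_simps)
  then have "2 * sqrt (det G) * \<bar>skew\<bar> = 2 * (\<beta> * quad_u G / n3)"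
    by (simp add: mult.assoc)
  then show "sld_cost G + \<beta>\<^sup>2 * quad_u G / n3 + 2 * (sqrt (det G) * \<bar>skew\<bar>) - 2 * (\<beta> * quad_u G / n3)
      = sld_cost G - \<beta>\<^sup>2 * quad_u G / n3 + \<beta> * (2 * sqrt (det G) * \<bar>skew\<bar>)"
    unfolding h by (simp add: power2_eq_square field_simps)
qed (simp add: power2_eq_square)

definition beta_opt :: "real^2^2 \<Rightarrow> real" where
  "beta_opt G = (if beta_hat G \<rho> dR \<ge> 1 then 1 else real_of_ereal (beta_hat G \<rho> dR))"

lemma beta_opt:
  assumes G: "real_pos_def G"
  shows "0 \<le> beta_opt G" "beta_opt G \<le> 1"
    "beta_opt G * quad_u G \<le> n3 * sqrt (det G) * \<bar>skew\<bar>"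
    "beta_opt G = 1 \<or> beta_opt G * quad_u G = n3 * sqrt (det G) * \<bar>skew\<bar>"
proof -
  have "0 \<le> beta_opt G \<and> beta_opt G \<le> 1 \<and> beta_opt G * quad_u G \<le> n3 * sqrt (det G) * \<bar>skew\<bar>
      \<and> (beta_opt G = 1 \<or> beta_opt G * quad_u G = n3 * sqrt (det G) * \<bar>skew\<bar>)"
  proof (cases "u 1 = 0 \<and> u 2 = 0")
    case True
    then show ?thesis
      using n3_pos real_pos_def_2_entries(4)[OF G] by (simp add: beta_opt_def beta_hat_eq[OF G] quad_u_def)
  next
    case False
    define b where "b = n3 * sqrt (det G) * \<bar>skew\<bar> / quad_u G"
    have Q: "0 < quad_u G"
      using quad_u_pos[OF G] False by blast
    have "beta_hat G \<rho> dR = ereal b"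
      using False Q n3_pos unfolding beta_hat_eq[OF G] b_def by (simp add: field_simps)
    moreover have "0 \<le> b" "1 \<le> b \<longleftrightarrow> quad_u G \<le> n3 * sqrt (det G) * \<bar>skew\<bar>"
      "b * quad_u G = n3 * sqrt (det G) * \<bar>skew\<bar>"
      using Q n3_pos real_pos_def_2_entries(4)[OF G] unfolding b_def by (simp_all add: le_divide_eq)
    ultimately show ?thesis
      unfolding beta_opt_def by auto
  qed
  then show "0 \<le> beta_opt G" "beta_opt G \<le> 1"
    "beta_opt G * quad_u G \<le> n3 * sqrt (det G) * \<bar>skew\<bar>"
    "beta_opt G = 1 \<or> beta_opt G * quad_u G = n3 * sqrt (det G) * \<bar>skew\<bar>"
    by auto
qed

lemma Cbeta_beta_opt_attained:
  assumes "real_pos_def G"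
  obtains B where "\<forall>j. hermitian (B j)" "\<forall>i j. mtr (dR i ** B j) = (if i = j then 1 else 0)"
    "holevo_cost G (Zmat \<rho> B) = Cbeta (beta_opt G) G \<rho> dR"
proof -
  let ?B = "B_line G (- sgn skew * beta_opt G / (n3 * sqrt (det G)))"
  show thesis
    by (rule that[of ?B])
      (use B_family_hermitian B_family_unbiased holevo_cost_B_line_eq_Cbeta[OF assms beta_opt[OF assms]]
        in \<open>simp_all add: B_line_def\<close>)
qed

lemma holevo_eq_Cbeta_beta_opt:
  assumes G: "real_pos_def G"
  shows "holevo G \<rho> dR = Cbeta (beta_opt G) G \<rho> dR"
  unfolding holevo_eq_Inf_holevo_cost
proof (rule cInf_eq_minimum)
  obtain B where "\<forall>j. hermitian (B j)" "\<forall>i j. mtr (dR i ** B j) = (if i = j then 1 else 0)"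
    "holevo_cost G (Zmat \<rho> B) = Cbeta (beta_opt G) G \<rho> dR"
    using Cbeta_beta_opt_attained[OF G] .
  then show "Cbeta (beta_opt G) G \<rho> dR \<in> {holevo_cost G (Zmat \<rho> B) | B.
      (\<forall>j. hermitian (B j)) \<and> (\<forall>i j. mtr (dR i ** B j) = (if i = j then 1 else 0))}"
    by force
next
  fix x
  assume "x \<in> {holevo_cost G (Zmat \<rho> B) | B.
      (\<forall>j. hermitian (B j)) \<and> (\<forall>i j. mtr (dR i ** B j) = (if i = j then 1 else 0))}"
  then obtain B where x: "x = holevo_cost G (Zmat \<rho> B)"
    and B: "\<forall>j. hermitian (B j)" "\<forall>i j. mtr (dR i ** B j) = (if i = j then 1 else 0)"
    by blast
  show "Cbeta (beta_opt G) G \<rho> dR \<le> x"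
    unfolding x by (rule Cbeta_le_holevo_cost[OF B G beta_opt(1,2)[OF G]])
qed

lemma SUP_Cbeta_eq_Cbeta_beta_opt:
  assumes G: "real_pos_def G"
  shows "(SUP \<beta>\<in>{0..1}. Cbeta \<beta> G \<rho> dR) = Cbeta (beta_opt G) G \<rho> dR"
proof (rule cSup_eq_maximum)
  show "Cbeta (beta_opt G) G \<rho> dR \<in> (\<lambda>\<beta>. Cbeta \<beta> G \<rho> dR) ` {0..1}"
    using beta_opt(1,2)[OF G] by simp
next
  obtain B where B: "\<forall>j. hermitian (B j)" "\<forall>i j. mtr (dR i ** B j) = (if i = j then 1 else 0)"
    and cost: "holevo_cost G (Zmat \<rho> B) = Cbeta (beta_opt G) G \<rho> dR"
    using Cbeta_beta_opt_attained[OF G] .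
  show "x \<le> Cbeta (beta_opt G) G \<rho> dR" if "x \<in> (\<lambda>\<beta>. Cbeta \<beta> G \<rho> dR) ` {0..1}" for x
    using that Cbeta_le_holevo_cost[OF B G] unfolding cost by auto
qed

end

text \<open>Only the data at \<open>\<theta>0\<close> enter: the hypotheses on \<open>\<Theta>\<close>, density operators and smoothness
  merely make \<open>D\<rho>\<close> the derivative of a genuine model.\<close>

theorem theorem7:
  fixes \<rho>\<^sub>\<theta> :: "real^2 \<Rightarrow> complex^'n^'n"
    and \<Theta> :: "(real^2) set" and \<theta>0 :: "real^2"
    and D\<rho> :: "real^2 \<Rightarrow> complex^'n^'n"
    and T :: "(complex^'n^'n) set"
    and G :: "real^2^2"
  assumes "open \<Theta>" and "\<theta>0 \<in> \<Theta>"
    and "\<forall>\<theta>\<in>\<Theta>. density_op (\<rho>\<^sub>\<theta> \<theta>)"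
    and "\<forall>\<theta>\<in>\<Theta>. \<rho>\<^sub>\<theta> differentiable (at \<theta>)"
    and "(\<rho>\<^sub>\<theta> has_derivative D\<rho>) (at \<theta>0)"
    and "strictly_pos (\<rho>\<^sub>\<theta> \<theta>0)"
    and "\<forall>a b::real. a *\<^sub>R logder 0 (\<rho>\<^sub>\<theta> \<theta>0) (D\<rho> (axis 1 1))
                   + b *\<^sub>R logder 0 (\<rho>\<^sub>\<theta> \<theta>0) (D\<rho> (axis 2 1)) = 0 \<longrightarrow> a = 0 \<and> b = 0"
    and "subspace T" and "dim T = 3" and "\<forall>X\<in>T. hermitian X"
    and "span {logder 0 (\<rho>\<^sub>\<theta> \<theta>0) (D\<rho> (axis 1 1)), logder 0 (\<rho>\<^sub>\<theta> \<theta>0) (D\<rho> (axis 2 1))} \<subseteq> T"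
    and "comm_op (\<rho>\<^sub>\<theta> \<theta>0) ` T \<subseteq> T"
    and "real_pos_def G"
  shows "holevo G (\<rho>\<^sub>\<theta> \<theta>0) (\<lambda>i. D\<rho> (axis i 1))
           = (SUP \<beta>\<in>{0..1}. Cbeta \<beta> G (\<rho>\<^sub>\<theta> \<theta>0) (\<lambda>i. D\<rho> (axis i 1)))
       \<and> (SUP \<beta>\<in>{0..1}. Cbeta \<beta> G (\<rho>\<^sub>\<theta> \<theta>0) (\<lambda>i. D\<rho> (axis i 1)))
           = (if beta_hat G (\<rho>\<^sub>\<theta> \<theta>0) (\<lambda>i. D\<rho> (axis i 1)) \<ge> 1
              then Cbeta 1 G (\<rho>\<^sub>\<theta> \<theta>0) (\<lambda>i. D\<rho> (axis i 1))
              else Cbeta (real_of_ereal (beta_hat G (\<rho>\<^sub>\<theta> \<theta>0) (\<lambda>i. D\<rho> (axis i 1))))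
                     G (\<rho>\<^sub>\<theta> \<theta>0) (\<lambda>i. D\<rho> (axis i 1)))"
proof -
  interpret D_invariant_extension "\<rho>\<^sub>\<theta> \<theta>0" "\<lambda>i. D\<rho> (axis i 1)" T
    by unfold_locales (use assms in simp_all)
  show ?thesis
    using holevo_eq_Cbeta_beta_opt[OF \<open>real_pos_def G\<close>] SUP_Cbeta_eq_Cbeta_beta_opt[OF \<open>real_pos_def G\<close>]
    by (simp add: beta_opt_def)
qed

end
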